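(* For every $\lambda\in(0,\infty)$, $u\in(0,1)$, $m\in\mathbb N$ and $\gamma\in[0,1]$, \[ \left|\frac{\lambda N^2}{2u(1-u)(N+\lambda)}\sum_{n=0}^{mN}\Big(\frac N{N+\lambda}\Big)^n\Big[\Big(\tfrac1NS_{\beta_u}(L^{n+1}(J))-\tfrac1NS_{\beta_u}(L^n(J))\Big)-\Big(\tfrac1NS_{\beta_u}(L_0^{n+1}(J))-\tfrac1NS_{\beta_u}(L_0^n(J))\Big)\Big]\right|\le\frac{40\,\Delta_Q^\gamma}{1-u}\Big(1+\frac6N\Big)^{mN}. \]
   Context: $E$ is a finite set with $N=\#E>8$ elements, listed in a fixed order; $\mathsf M_E$ is the space of complex $N\times N$ matrices indexed by $E\times E$; $|x\rangle,\langle x|$ are standard unit column/row vectors, $C^*$ is transpose. $Q$ is an irreducible stochastic matrix on $E$ with $Q(x,y)=Q(y,x)$ for all $x,y$ and $\mathrm{tr}(Q)=0$; $|Q|^s$ is defined by functional calculus (same eigenvectors, eigenvalues $|q|^s$). $I$ is the identity, $J$ the matrix with all entries $1/N$. Let $(U,V)$ be random with $\mathbb P(U=x,V=y)=\frac1NQ(x,y)$, $T=I-|U\rangle\langle U|+|U\rangle\langle V|$, $L(C)=\mathbb E[T^*CT]$, and $L_0(C)=\frac{N-2}NC+\frac1N(CQ+QC)-\frac{2\,\mathrm{tr}(C)}{N^2}Q+\frac{2\,\mathrm{tr}(C)}{N^2}I$; powers are compositions. For $u\in(0,1)$, $\beta_u$ is a random vector with i.i.d. Bernoulli($u$) entries and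 $S_{\beta_u}(C)=\mathbb E[\langle\beta_u|C|\beta_u\rangle]$. $\mathcal R^\gamma_Q(x,s)=\{y\in E:|Q^s(x,x)-Q^s(y,y)|\le\gamma\}$ and \[ \Delta_Q^\gamma=\min_{s_0\in\mathbb N}\max\left\{\max_{0\le s\le s_0}\Big(\frac{\min_{x\in E}[N-\#\mathcal R^\gamma_Q(x,s)]}{N}+\gamma\Big),\ \frac{\mathrm{tr}(|Q|^{s_0})}{N}\right\}. \] *)

theory Defs
  imports "HOL-Analysis.Analysis"
begin

text \<open>Matrices indexed by a finite type 'e (playing the role of E, N = CARD('e)).\<close>

definition mpow :: "real^'e^'e \<Rightarrow> nat \<Rightarrow> real^'e^'e" where
  "mpow A n = ((\<lambda>M. M ** A) ^^ n) (mat 1)"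

definition stochastic :: "real^'e^'e \<Rightarrow> bool" where
  "stochastic Q \<longleftrightarrow> (\<forall>x y. Q$x$y \<ge> 0) \<and> (\<forall>x. (\<Sum>y\<in>UNIV. Q$x$y) = 1)"

definition irreducible_mat :: "real^'e^'e \<Rightarrow> bool" where
  "irreducible_mat Q \<longleftrightarrow> (\<forall>x y. \<exists>n. mpow Q n $ x $ y > 0)"

definition diag_mat :: "('e \<Rightarrow> real) \<Rightarrow> real^'e^'e" where
  "diag_mat d = (\<chi> i j. if i = j then d i else 0)"

definition abs_mpow :: "real^'e^'e \<Rightarrow> nat \<Rightarrow> real^'e^'e" where
  "abs_mpow A s = (SOME M. \<exists>P d. orthogonal_matrix P \<and> A = P ** diag_mat d ** transpose P
       \<and> M = P ** diag_mat (\<lambda>i. \<bar>d i\<bar> ^ s) ** transpose P)"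

definition cmat :: "real^'e^'e \<Rightarrow> complex^'e^'e" where
  "cmat A = (\<chi> i j. complex_of_real (A$i$j))"

definition ket_bra :: "'e \<Rightarrow> 'e \<Rightarrow> complex^'e^'e" where
  "ket_bra x y = (\<chi> i j. if i = x \<and> j = y then 1 else 0)"

definition Jmat :: "complex^'e^'e" where
  "Jmat = (\<chi> i j. 1 / of_nat CARD('e))"

definition Tmat :: "'e \<Rightarrow> 'e \<Rightarrow> complex^'e^'e" where
  "Tmat x y = mat 1 - ket_bra x x + ket_bra x y"

text \<open>L(C) = E[T^* C T] with P(U=x,V=y) = Q(x,y)/N; C^* is the transpose.\<close>
definition Lop :: "real^'e^'e \<Rightarrow> complex^'e^'e \<Rightarrow> complex^'e^'e" where
  "Lop Q C = (\<Sum>x\<in>UNIV. \<Sum>y\<in>UNIV.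
      (Q$x$y / real CARD('e)) *\<^sub>R (transpose (Tmat x y) ** C ** Tmat x y))"

definition L0op :: "real^'e^'e \<Rightarrow> complex^'e^'e \<Rightarrow> complex^'e^'e" where
  "L0op Q C = (let N = of_nat CARD('e) :: complex; Qc = cmat Q in
     (\<chi> i j. (N - 2) / N * C$i$j + 1 / N * ((C ** Qc)$i$j + (Qc ** C)$i$j)
        - 2 * trace C / N^2 * Qc$i$j + 2 * trace C / N^2 * (mat 1 :: complex^'e^'e)$i$j))"

text \<open>S_{beta_u}(C) = E[<beta|C|beta>] for beta with i.i.d. Bernoulli(u) entries,
  written as the explicit finite expectation over the support set B = {x. beta_x = 1}.\<close>
definition S_beta :: "real \<Rightarrow> complex^'e^'e \<Rightarrow> complex" where
  "S_beta u C = (\<Sum>B\<in>Pow (UNIV :: 'e set).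
      complex_of_real (u ^ card B * (1 - u) ^ (CARD('e) - card B)) * (\<Sum>x\<in>B. \<Sum>y\<in>B. C$x$y))"

definition Rset :: "real^'e^'e \<Rightarrow> real \<Rightarrow> 'e \<Rightarrow> nat \<Rightarrow> 'e set" where
  "Rset Q \<gamma> x s = {y. \<bar>mpow Q s $ x $ x - mpow Q s $ y $ y\<bar> \<le> \<gamma>}"

definition Delta :: "real^'e^'e \<Rightarrow> real \<Rightarrow> real" where
  "Delta Q \<gamma> = (INF s0::nat. max
      (Max ((\<lambda>s. Min ((\<lambda>x. (real CARD('e) - real (card (Rset Q \<gamma> x s))) / real CARD('e)) ` UNIV) + \<gamma>)
            ` {0..s0}))
      (trace (abs_mpow Q s0) / real CARD('e)))"

end

theory Submission
  imports Defs
begin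

(* S_beta u C = u^2 (sum of the entries of C) + u (1 - u) tr C.  Both L and L0 preserve the sum
   of the entries and raise the trace by (2/N) tr (C Q), so the n-th bracket equals
   2u(1-u)/N^2 tr ((L^n J - L0^n J) Q), and the prefactor turns the sum into an average with
   weights (1 - w) w^n, w = N/(N + lam).  The difference L - L0 only sees how far the diagonal of
   its argument is from its mean.  Now L0^n J is J plus a combination of the powers Q^s with
   coefficients of l1-norm at most ((1 + 4/N)^n - 1)/N, and the diagonal of every Q^s is within
   2 N Delta of a constant (in l1): for s <= s0 by the definition of the sets R, for s > s0
   because its absolute values are dominated by the diagonal of |Q|^s0.  As L is an l1-contraction,
   the entrywise l1 distance of L^n J and L0^n J is at most 2 Delta (1 + 4/N)^n. *)

lemma linear_coeff_eq_0_if_quadratic_nonneg: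
  fixes a b :: real
  assumes "\<And>t. 0 \<le> 2*t*a + t^2*b"
  shows "a = 0"
proof (rule ccontr)
  assume "a \<noteq> 0"
  define c where "c = \<bar>b\<bar> + 1"
  have pos: "c > 0" unfolding c_def by simp
  define t where "t = - a / c"
  have "0 \<le> 2*t*a + t^2*b" by (rule assms)
  have "t^2*b \<le> t^2 * c" unfolding c_def by (intro mult_left_mono) auto
  also have "t^2 * c = a^2 / c" unfolding t_def using pos by (simp add: power2_eq_square)
  finally have "t^2*b \<le> a^2/c" .
  moreover have "2*t*a = -2*(a^2/c)" unfolding t_def by (simp add: power2_eq_square)
  moreover have "a^2/c > 0" using pos \<open>a \<noteq> 0\<close> by simp
  ultimately show False using \<open>0 \<le> 2*t*a + t^2*b\<close> by linarith
qed

lemma inner_symmetric_matrix_vector: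
  fixes A :: "real^'n^'n"
  assumes sym: "\<forall>i j. A$i$j = A$j$i"
  shows "x \<bullet> (A *v y) = (A *v x) \<bullet> y"
proof -
  have "x \<bullet> (A *v y) = (\<Sum>i\<in>UNIV. \<Sum>j\<in>UNIV. x$i * A$i$j * y$j)"
    unfolding inner_vec_def matrix_vector_mult_def by (simp add: sum_distrib_left mult_ac)
  also have "\<dots> = (\<Sum>j\<in>UNIV. \<Sum>i\<in>UNIV. x$i * A$i$j * y$j)" by (rule sum.swap)
  also have "\<dots> = (A *v x) \<bullet> y"
    unfolding inner_vec_def matrix_vector_mult_def
    by (simp add: sum_distrib_left sum_distrib_right sym mult_ac)
  finally show ?thesis .
qed

lemma symmetric_maximizer_is_eigenvector:
  fixes A :: "real^'n^'n"
  assumes sym: "\<forall>i j. A$i$j = A$j$i" and sub: "subspace S" and inv: "\<forall>x\<in>S. A *v x \<in> S"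
    and vS: "v \<in> S" and vn: "norm v = 1"
    and vmax: "\<And>x. x \<in> S \<Longrightarrow> norm x = 1 \<Longrightarrow> x \<bullet> (A *v x) \<le> v \<bullet> (A *v v)"
  shows "A *v v = (v \<bullet> (A *v v)) *\<^sub>R v"
proof -
  define l where "l = v \<bullet> (A *v v)"
  define B where "B x = l *\<^sub>R x - A *v x" for x
  have B_lin: "B (a + t *\<^sub>R b) = B a + t *\<^sub>R B b" for a b t
    by (simp add: B_def algebra_simps matrix_vector_mult_scaleR matrix_vector_right_distrib)
  have B_sym: "a \<bullet> B b = b \<bullet> B a" for a b
    by (simp add: B_def inner_diff_right inner_symmetric_matrix_vector[OF sym, of a b] inner_commute)
  have B_nonneg: "0 \<le> x \<bullet> B x" if "x \<in> S" for x
  proof (cases "x = 0")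
    case False
    define y where "y = x /\<^sub>R norm x"
    have "y \<in> S" "norm y = 1" using that False sub by (auto simp: y_def subspace_scale)
    hence "y \<bullet> (A *v y) \<le> l" using vmax l_def by blast
    moreover have "y \<bullet> (A *v y) = (x \<bullet> (A *v x)) / (x \<bullet> x)"
      by (simp add: y_def matrix_vector_mult_scaleR power2_norm_eq_inner[symmetric]
          power2_eq_square divide_inverse mult_ac)
    moreover have "x \<bullet> x > 0" using False by simp
    ultimately show ?thesis by (simp add: B_def inner_diff_right divide_le_eq)
  qed simp
  \<comment> \<open>The form x \<bullet> B x is nonnegative on S and vanishes at v, so its derivative at v
    in every direction w \<in> S vanishes.\<close>
  have "w \<bullet> B v = 0" if "w \<in> S" for w
  proof (rule linear_coeff_eq_0_if_quadratic_nonneg)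
    fix t :: real
    have "0 \<le> (v + t *\<^sub>R w) \<bullet> B (v + t *\<^sub>R w)"
      using sub vS that by (intro B_nonneg) (simp add: subspace_add subspace_scale)
    also have "\<dots> = v \<bullet> B v + t * (v \<bullet> B w) + t * (w \<bullet> B v) + t^2 * (w \<bullet> B w)"
      by (simp add: B_lin inner_add_left inner_add_right power2_eq_square algebra_simps)
    also have "\<dots> = 2*t*(w \<bullet> B v) + t^2 * (w \<bullet> B w)"
      using vn B_sym[of v w] by (simp add: B_def inner_diff_right l_def norm_eq_1)
    finally show "0 \<le> 2*t*(w \<bullet> B v) + t^2 * (w \<bullet> B w)" .
  qed
  moreover have "B v \<in> S" using sub inv vS by (simp add: B_def subspace_diff subspace_scale)
  ultimately have "B v = 0" by (metis inner_eq_zero_iff)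
  thus ?thesis by (simp add: B_def l_def)
qed

lemma symmetric_invariant_subspace_has_unit_eigenvector:
  fixes A :: "real^'n^'n"
  assumes sym: "\<forall>i j. A$i$j = A$j$i" and sub: "subspace S" and inv: "\<forall>x\<in>S. A *v x \<in> S"
    and nontriv: "z \<in> S" "z \<noteq> 0"
  obtains v where "v \<in> S" "norm v = 1" "A *v v = (v \<bullet> (A *v v)) *\<^sub>R v"
proof -
  let ?K = "S \<inter> sphere 0 1"
  have "compact ?K" by (intro closed_Int_compact closed_subspace sub compact_sphere)
  moreover have "z /\<^sub>R norm z \<in> ?K" using nontriv sub by (auto simp: subspace_scale)
  moreover have "continuous_on ?K (\<lambda>x. x \<bullet> (A *v x))"
    by (intro continuous_intros linear_continuous_on linear_conv_bounded_linear[THEN iffD1]) auto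
  ultimately obtain v where "v \<in> ?K" and "\<forall>x\<in>?K. x \<bullet> (A *v x) \<le> v \<bullet> (A *v v)"
    using continuous_attains_sup[of ?K] by blast
  with symmetric_maximizer_is_eigenvector[OF sym sub inv] that show ?thesis by auto
qed

lemma symmetric_invariant_subspace_orthonormal_eigenbasis:
  fixes A :: "real^'n^'n"
  assumes sym: "\<forall>i j. A$i$j = A$j$i"
  shows "subspace S \<Longrightarrow> (\<forall>x\<in>S. A *v x \<in> S) \<Longrightarrow>
    \<exists>B. B \<subseteq> S \<and> pairwise orthogonal B \<and> (\<forall>b\<in>B. norm b = 1 \<and> (\<exists>l. A *v b = l *\<^sub>R b))
      \<and> S \<subseteq> span B"
proof (induction "dim S" arbitrary: S rule: less_induct)
  case less
  note sub = less.prems(1) and inv = less.prems(2)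
  show ?case
  proof (cases "S \<subseteq> {0}")
    case True then show ?thesis by (intro exI[of _ "{}"]) auto
  next
    case False
    then obtain z where "z \<in> S" "z \<noteq> 0" by auto
    then obtain v where vS: "v \<in> S" and vn: "norm v = 1" and eig: "\<exists>l. A *v v = l *\<^sub>R v"
      using symmetric_invariant_subspace_has_unit_eigenvector[OF sym sub inv] by metis
    have vv: "v \<bullet> v = 1" using vn by (simp add: norm_eq_1)
    define S' where "S' = S \<inter> {x. orthogonal v x}"
    have sub': "subspace S'" unfolding S'_def
      by (intro subspace_inter sub subspace_orthogonal_to_vector)
    have inv': "\<forall>x\<in>S'. A *v x \<in> S'"
    proof
      fix x assume "x \<in> S'"
      hence "x \<in> S" and "v \<bullet> x = 0" by (auto simp: S'_def orthogonal_def)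
      moreover have "v \<bullet> (A *v x) = (A *v v) \<bullet> x" by (rule inner_symmetric_matrix_vector[OF sym])
      ultimately show "A *v x \<in> S'" using inv eig by (auto simp: S'_def orthogonal_def)
    qed
    have "v \<notin> S'" using vv by (auto simp: S'_def orthogonal_def)
    hence "span S' \<subset> span S"
      using vS sub sub' by (auto simp: S'_def span_eq_iff[THEN iffD2])
    hence "dim S' < dim S" by (rule dim_psubset)
    from less.hyps[OF this sub' inv'] obtain B' where B': "B' \<subseteq> S'" "pairwise orthogonal B'"
        "\<forall>b\<in>B'. norm b = 1 \<and> (\<exists>l. A *v b = l *\<^sub>R b)" "S' \<subseteq> span B'"
      by blast
    show ?thesis
    proof (intro exI[of _ "insert v B'"] conjI)
      show "insert v B' \<subseteq> S" using B'(1) vS by (auto simp: S'_def)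
      show "pairwise orthogonal (insert v B')"
        using B'(1,2) by (auto simp: pairwise_insert S'_def orthogonal_commute)
      show "\<forall>b\<in>insert v B'. norm b = 1 \<and> (\<exists>l. A *v b = l *\<^sub>R b)" using B'(3) vn eig by auto
      show "S \<subseteq> span (insert v B')"
      proof
        fix x assume "x \<in> S"
        hence "x - (v \<bullet> x) *\<^sub>R v \<in> S'"
          using vS sub vv by (auto simp: S'_def orthogonal_def subspace_diff subspace_scale inner_diff_right)
        then show "x \<in> span (insert v B')" using B'(4) span_breakdown_eq by blast
      qed
    qed
  qed
qed

lemma symmetric_matrix_orthonormal_eigenvectors:
  fixes A :: "real^'n^'n"
  assumes sym: "\<forall>i j. A$i$j = A$j$i"
  obtains g :: "'n \<Rightarrow> real^'n" and d where "\<And>j. A *v g j = d j *\<^sub>R g j"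
    and "\<And>j k. g j \<bullet> g k = (if j = k then 1 else 0)"
proof -
  obtain B where B: "pairwise orthogonal B" "\<forall>b\<in>B. norm b = 1 \<and> (\<exists>l. A *v b = l *\<^sub>R b)"
      "UNIV \<subseteq> span B"
    using symmetric_invariant_subspace_orthonormal_eigenbasis[OF sym, of UNIV] by auto
  have "0 \<notin> B" using B(2) by force
  hence ind: "independent B" using B(1) pairwise_orthogonal_independent by blast
  have "card B = dim (span B)" using dim_eq_card_independent[OF ind] by simp
  also have "span B = UNIV" using B(3) by auto
  finally have "card B = CARD('n)" by simp
  then obtain g where g: "bij_betw g (UNIV::'n set) B"
    using finite_same_card_bij[of "UNIV::'n set" B] independent_bound[OF ind] by auto
  have gB: "g j \<in> B" for j using g by (auto simp: bij_betw_def)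
  define d where "d j = (SOME l. A *v g j = l *\<^sub>R g j)" for j
  have "A *v g j = d j *\<^sub>R g j" for j
    unfolding d_def using B(2) gB[of j] by (metis (mono_tags, lifting) someI_ex)
  moreover have "g j \<bullet> g k = (if j = k then 1 else 0)" for j k
  proof (cases "j = k")
    case True
    then show ?thesis using B(2) gB[of j] by (simp add: norm_eq_1)
  next
    case False
    hence "g j \<noteq> g k" using g by (auto simp: bij_betw_def inj_on_def)
    then show ?thesis using B(1) gB[of j] gB[of k] False by (auto simp: pairwise_def orthogonal_def)
  qed
  ultimately show ?thesis using that by blast
qed

lemma orthonormal_eigenvectors_diagonalize:
  fixes A :: "real^'n^'n" and g :: "'n \<Rightarrow> real^'n"
  assumes eig: "\<And>j. A *v g j = d j *\<^sub>R g j"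
    and orth: "\<And>j k. g j \<bullet> g k = (if j = k then 1 else 0)"
  defines "P \<equiv> \<chi> i j. g j $ i"
  shows "orthogonal_matrix P" and "A = P ** diag_mat d ** transpose P"
proof -
  have "transpose P ** P = mat 1"
    using orth by (simp add: vec_eq_iff matrix_matrix_mult_def P_def transpose_def mat_def inner_vec_def)
  then show oP: "orthogonal_matrix P" by (simp add: orthogonal_matrix)
  have "(A ** P)$i$j = (P ** diag_mat d)$i$j" for i j
  proof -
    have "(A ** P)$i$j = (A *v g j)$i"
      unfolding matrix_matrix_mult_def matrix_vector_mult_def P_def by simp
    also have "\<dots> = (P ** diag_mat d)$i$j"
      unfolding eig matrix_matrix_mult_def diag_mat_def P_def
      by (simp add: if_distrib[where f="\<lambda>x. _ * x"] sum.delta' cong: if_cong)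
    finally show ?thesis .
  qed
  then have "A ** P = P ** diag_mat d" by (simp add: vec_eq_iff)
  moreover have "A = A ** (P ** transpose P)" using oP by (simp add: orthogonal_matrix_def)
  ultimately show "A = P ** diag_mat d ** transpose P" by (simp add: matrix_mul_assoc)
qed

lemma symmetric_matrix_orthogonally_diagonalizable:
  fixes A :: "real^'n^'n"
  assumes "\<forall>i j. A$i$j = A$j$i"
  shows "\<exists>P d. orthogonal_matrix P \<and> A = P ** diag_mat d ** transpose P"
  using orthonormal_eigenvectors_diagonalize symmetric_matrix_orthonormal_eigenvectors[OF assms]
  by metis

lemma mpow_0 [simp]: "mpow A 0 = mat 1"
  by (simp add: mpow_def)

lemma mpow_Suc: "mpow A (Suc n) = mpow A n ** A"
  by (simp add: mpow_def)

lemma mpow_Suc_left: "mpow A (Suc n) = A ** mpow A n"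
proof (induction n)
  case (Suc n)
  have "mpow A (Suc (Suc n)) = A ** mpow A n ** A" using Suc by (simp add: mpow_Suc)
  also have "\<dots> = A ** mpow A (Suc n)" by (simp add: mpow_Suc matrix_mul_assoc)
  finally show ?case .
qed (simp add: mpow_def)

lemma stochastic_entry_le_1:
  assumes "stochastic Q"
  shows "Q$x$y \<le> 1"
proof -
  have "Q$x$y \<le> (\<Sum>y\<in>UNIV. Q$x$y)" using assms by (intro member_le_sum) (auto simp: stochastic_def)
  thus ?thesis using assms by (simp add: stochastic_def)
qed

lemma stochastic_mpow:
  assumes Q: "stochastic Q"
  shows "stochastic (mpow Q n)"
proof (induction n)
  case 0 then show ?case by (simp add: stochastic_def mat_def sum.delta)
next
  case (Suc n)
  have "\<forall>x y. 0 \<le> mpow Q n $ x $ y" "\<forall>x y. 0 \<le> Q $ x $ y"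
    using Suc Q by (simp_all add: stochastic_def)
  then have "0 \<le> mpow Q (Suc n) $ x $ y" for x y
    by (simp add: mpow_Suc matrix_matrix_mult_def sum_nonneg)
  moreover have "(\<Sum>y\<in>UNIV. mpow Q (Suc n) $ x $ y) = 1" for x
  proof -
    have "(\<Sum>y\<in>UNIV. mpow Q (Suc n) $ x $ y)
        = (\<Sum>k\<in>UNIV. mpow Q n $ x $ k * (\<Sum>y\<in>UNIV. Q $ k $ y))"
      unfolding mpow_Suc matrix_matrix_mult_def sum_distrib_left vec_lambda_beta by (rule sum.swap)
    also have "\<dots> = 1" using Suc Q by (simp add: stochastic_def)
    finally show ?thesis .
  qed
  ultimately show ?case by (simp add: stochastic_def)
qed

lemma stochastic_eigenvalue_abs_le_1:
  fixes Q :: "real^'e^'e"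
  assumes Q: "stochastic Q" and eig: "Q *v v = l *\<^sub>R v" and "v \<noteq> 0"
  shows "\<bar>l\<bar> \<le> 1"
proof -
  obtain y where ymax: "\<And>k. \<bar>v$k\<bar> \<le> \<bar>v$y\<bar>"
  proof -
    have "Max (range (\<lambda>k. \<bar>v$k\<bar>)) \<in> range (\<lambda>k. \<bar>v$k\<bar>)" by (rule Max_in) auto
    then obtain y where "\<bar>v$y\<bar> = Max (range (\<lambda>k. \<bar>v$k\<bar>))" by (metis rangeE)
    moreover have "\<bar>v$k\<bar> \<le> Max (range (\<lambda>k. \<bar>v$k\<bar>))" for k by (rule Max_ge) auto
    ultimately show ?thesis using that by metis
  qed
  obtain k where "v$k \<noteq> 0" using \<open>v \<noteq> 0\<close> by (auto simp: vec_eq_iff)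
  then have "\<bar>v$y\<bar> > 0" using ymax[of k] by linarith
  have "\<bar>l\<bar> * \<bar>v$y\<bar> = \<bar>\<Sum>k\<in>UNIV. Q$y$k * v$k\<bar>"
    using arg_cong[OF eig, of "\<lambda>w. w$y"] by (simp add: matrix_vector_mult_def abs_mult)
  also have "\<dots> \<le> (\<Sum>k\<in>UNIV. Q$y$k * \<bar>v$y\<bar>)"
    using Q ymax by (intro order_trans[OF sum_abs] sum_mono)
      (auto simp: abs_mult stochastic_def intro: mult_left_mono)
  also have "\<dots> = \<bar>v$y\<bar>" using Q by (simp add: stochastic_def sum_distrib_right[symmetric])
  finally show ?thesis using \<open>\<bar>v$y\<bar> > 0\<close> by (simp add: mult_le_cancel_right1)
qed

lemma diag_mat_mult: "diag_mat a ** diag_mat b = diag_mat (\<lambda>i. a i * b i)"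
  unfolding diag_mat_def matrix_matrix_mult_def
  by (simp add: vec_eq_iff if_distrib[where f="\<lambda>x. x * _"] sum.delta cong: if_cong)

lemma conjugate_diag_mat_entry:
  "(P ** diag_mat e ** transpose P)$a$b = (\<Sum>i\<in>UNIV. P$a$i * e i * P$b$i)"
  unfolding diag_mat_def matrix_matrix_mult_def transpose_def
  by (simp add: if_distrib[where f="\<lambda>x. _ * x"] if_distrib[where f="\<lambda>x. x * _"] sum.delta
      cong: if_cong)

lemma mpow_orthogonal_diagonalization:
  fixes P :: "real^'n^'n"
  assumes P: "orthogonal_matrix P" and Q: "Q = P ** diag_mat d ** transpose P"
  shows "mpow Q s = P ** diag_mat (\<lambda>i. d i ^ s) ** transpose P"
proof (induction s)
  case 0
  have "diag_mat (\<lambda>i. d i ^ 0) = (mat 1 :: real^'n^'n)" by (simp add: diag_mat_def mat_def)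
  then show ?case using P by (simp only: mpow_0 matrix_mul_rid orthogonal_matrix_def)
next
  case (Suc s)
  have "mpow Q (Suc s) = P ** (diag_mat (\<lambda>i. d i ^ s) ** (transpose P ** P) ** diag_mat d) ** transpose P"
    using Suc Q by (simp add: mpow_Suc matrix_mul_assoc)
  also have "\<dots> = P ** diag_mat (\<lambda>i. d i ^ Suc s) ** transpose P"
    using P by (simp add: orthogonal_matrix_def diag_mat_mult mult.commute)
  finally show ?case .
qed

lemma stochastic_diagonalization_eigenvalue_abs_le_1:
  fixes Q :: "real^'e^'e"
  assumes Q: "stochastic Q" and P: "orthogonal_matrix P" and QP: "Q = P ** diag_mat d ** transpose P"
  shows "\<bar>d i\<bar> \<le> 1"
proof (rule stochastic_eigenvalue_abs_le_1[OF Q])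
  have "transpose P ** P = mat 1" using P by (simp add: orthogonal_matrix_def)
  then have QP_P: "Q ** P = P ** diag_mat d" using QP by (simp add: matrix_mul_assoc[symmetric])
  have "(Q *v column i P)$k = d i * P$k$i" for k
  proof -
    have "(Q *v column i P)$k = (P ** diag_mat d)$k$i"
      unfolding QP_P[symmetric] by (simp add: matrix_vector_mult_def matrix_matrix_mult_def column_def)
    also have "\<dots> = d i * P$k$i"
      by (simp add: matrix_matrix_mult_def diag_mat_def if_distrib[where f="\<lambda>x. _ * x"] sum.delta'
          cong: if_cong)
    finally show ?thesis .
  qed
  then show "Q *v column i P = d i *\<^sub>R column i P" by (simp add: vec_eq_iff column_def)
  have "column i P \<bullet> column i P = 1"
    using arg_cong[OF P[unfolded orthogonal_matrix_def, THEN conjunct1], of "\<lambda>M. M$i$i"]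
    by (simp add: matrix_matrix_mult_def transpose_def mat_def column_def inner_vec_def)
  then show "column i P \<noteq> 0" by auto
qed

lemma sum_abs_diag_mpow_le_trace_abs_mpow:
  fixes Q :: "real^'e^'e"
  assumes Q: "stochastic Q" and sym: "\<forall>i j. Q$i$j = Q$j$i" and "s0 \<le> s"
  shows "(\<Sum>y\<in>UNIV. \<bar>mpow Q s $ y $ y\<bar>) \<le> trace (abs_mpow Q s0)"
proof -
  have "\<exists>P d. orthogonal_matrix P \<and> Q = P ** diag_mat d ** transpose P
       \<and> abs_mpow Q s0 = P ** diag_mat (\<lambda>i. \<bar>d i\<bar> ^ s0) ** transpose P"
    unfolding abs_mpow_def
    by (rule someI_ex) (use symmetric_matrix_orthogonally_diagonalizable[OF sym] in blast)
  then obtain P d where P: "orthogonal_matrix P" and QP: "Q = P ** diag_mat d ** transpose P"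
    and abs: "abs_mpow Q s0 = P ** diag_mat (\<lambda>i. \<bar>d i\<bar> ^ s0) ** transpose P"
    by blast
  have "\<bar>d i\<bar> ^ s \<le> \<bar>d i\<bar> ^ s0" for i
    using stochastic_diagonalization_eigenvalue_abs_le_1[OF Q P QP] \<open>s0 \<le> s\<close>
    by (intro power_decreasing) auto
  hence "\<bar>P$y$i * d i ^ s * P$y$i\<bar> \<le> P$y$i * \<bar>d i\<bar> ^ s0 * P$y$i" for y i
    using mult_left_mono[of "\<bar>d i\<bar> ^ s" "\<bar>d i\<bar> ^ s0" "P$y$i * P$y$i"]
    by (simp add: abs_mult power_abs mult_ac)
  hence "(\<Sum>y\<in>UNIV. \<bar>\<Sum>i\<in>UNIV. P$y$i * d i ^ s * P$y$i\<bar>)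
      \<le> (\<Sum>y\<in>UNIV. \<Sum>i\<in>UNIV. P$y$i * \<bar>d i\<bar> ^ s0 * P$y$i)"
    by (intro sum_mono order_trans[OF sum_abs])
  then show ?thesis
    by (simp add: mpow_orthogonal_diagonalization[OF P QP] abs trace_def conjugate_diag_mat_entry)
qed

definition diag_offset :: "complex^'e^'e \<Rightarrow> 'e \<Rightarrow> complex" where
  "diag_offset C x = C$x$x - trace C / of_nat CARD('e)"

definition diag_deviation :: "complex^'e^'e \<Rightarrow> real" where
  "diag_deviation C = (\<Sum>y\<in>UNIV. norm (diag_offset C y))"

lemma diag_deviation_le_twice_dist:
  fixes C :: "complex^'e^'e"
  shows "diag_deviation C \<le> 2 * (\<Sum>y\<in>UNIV. norm (C$y$y - c))"
proof -
  define S where "S = (\<Sum>y\<in>UNIV. norm (C$y$y - c))"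
  define N where "N = real CARD('e)"
  have N: "N > 0" by (simp add: N_def)
  have "norm (trace C / of_nat CARD('e) - c) = norm (\<Sum>y\<in>UNIV. C$y$y - c) / N"
    by (simp add: trace_def sum_subtractf field_simps norm_divide N_def)
  also have "\<dots> \<le> S / N" unfolding S_def using N by (intro divide_right_mono norm_sum) auto
  finally have mean: "N * norm (trace C / of_nat CARD('e) - c) \<le> S"
    using N by (simp add: field_simps)
  have "diag_deviation C \<le> (\<Sum>y\<in>UNIV. norm (C$y$y - c) + norm (trace C / of_nat CARD('e) - c))"
    unfolding diag_deviation_def diag_offset_def
    by (intro sum_mono) (use norm_triangle_ineq4[of "C$_$_ - c" "trace C / of_nat CARD('e) - c"] in simp)
  also have "\<dots> = S + N * norm (trace C / of_nat CARD('e) - c)"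
    by (simp add: S_def N_def sum.distrib)
  finally show ?thesis using mean by (simp add: S_def)
qed

definition Delta_at :: "real^'e^'e \<Rightarrow> real \<Rightarrow> nat \<Rightarrow> real" where
  "Delta_at Q \<gamma> s0 = max
      (Max ((\<lambda>s. Min ((\<lambda>x. (real CARD('e) - real (card (Rset Q \<gamma> x s))) / real CARD('e)) ` UNIV) + \<gamma>)
            ` {0..s0}))
      (trace (abs_mpow Q s0) / real CARD('e))"

lemma Delta_eq_INF_Delta_at: "Delta Q \<gamma> = (INF s0. Delta_at Q \<gamma> s0)"
  by (simp add: Delta_def Delta_at_def)

lemma sum_abs_diag_mpow_diff_le_Rset:
  fixes Q :: "real^'e^'e"
  assumes Q: "stochastic Q" and "0 \<le> \<gamma>"
  shows "(\<Sum>y\<in>UNIV. \<bar>mpow Q s $ y $ y - mpow Q s $ x $ x\<bar>)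
    \<le> real CARD('e) * \<gamma> + (real CARD('e) - real (card (Rset Q \<gamma> x s)))"
proof -
  let ?R = "Rset Q \<gamma> x s"
  have "\<bar>mpow Q s $ y $ y - mpow Q s $ x $ x\<bar> \<le> \<gamma> + (if y \<in> ?R then 0 else 1)" for y
  proof (cases "y \<in> ?R")
    case False
    have "0 \<le> mpow Q s $ z $ z" "mpow Q s $ z $ z \<le> 1" for z
      using stochastic_entry_le_1[OF stochastic_mpow[OF Q]] stochastic_mpow[OF Q]
      by (auto simp: stochastic_def)
    then show ?thesis using False \<open>0 \<le> \<gamma>\<close> by (smt (verit))
  qed (simp add: Rset_def abs_minus_commute)
  then have "(\<Sum>y\<in>UNIV. \<bar>mpow Q s $ y $ y - mpow Q s $ x $ x\<bar>)
      \<le> (\<Sum>y\<in>UNIV. \<gamma> + (if y \<in> ?R then 0 else 1))"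
    by (intro sum_mono)
  also have "\<dots> = real CARD('e) * \<gamma> + real (card (UNIV - ?R))"
    by (simp add: sum.distrib sum.If_cases Compl_eq_Diff_UNIV)
  also have "real (card (UNIV - ?R)) = real CARD('e) - real (card ?R)"
    by (simp add: card_Diff_subset card_mono of_nat_diff)
  finally show ?thesis .
qed

lemma diag_mpow_near_constant:
  fixes Q :: "real^'e^'e"
  assumes Q: "stochastic Q" and sym: "\<forall>i j. Q$i$j = Q$j$i" and "0 \<le> \<gamma>"
  shows "\<exists>c. (\<Sum>y\<in>UNIV. \<bar>mpow Q s $ y $ y - c\<bar>) \<le> real CARD('e) * Delta_at Q \<gamma> s0"
proof (cases "s \<le> s0")
  case True
  define N where "N = real CARD('e)"
  define f where "f x = (N - real (card (Rset Q \<gamma> x s))) / N" for x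
  have "Min (range f) \<in> range f" by (rule Min_in) auto
  then obtain x where x: "f x = Min (range f)" by (metis rangeE)
  have "N * (f x + \<gamma>) = N * \<gamma> + (N - real (card (Rset Q \<gamma> x s)))"
    by (simp add: f_def N_def field_simps)
  then have "(\<Sum>y\<in>UNIV. \<bar>mpow Q s $ y $ y - mpow Q s $ x $ x\<bar>) \<le> N * (f x + \<gamma>)"
    using sum_abs_diag_mpow_diff_le_Rset[OF Q \<open>0 \<le> \<gamma>\<close>, of s x] by (simp add: N_def)
  also have "f x + \<gamma> \<le> Delta_at Q \<gamma> s0"
    unfolding Delta_at_def x using True by (intro max.coboundedI1 Max_ge) (auto simp: f_def N_def)
  finally show ?thesis by (auto simp: N_def intro: mult_left_mono)
next
  case False
  have "(\<Sum>y\<in>UNIV. \<bar>mpow Q s $ y $ y - 0\<bar>) \<le> trace (abs_mpow Q s0)"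
    using sum_abs_diag_mpow_le_trace_abs_mpow[OF Q sym, of s0 s] False by simp
  also have "\<dots> = real CARD('e) * (trace (abs_mpow Q s0) / real CARD('e))" by simp
  also have "\<dots> \<le> real CARD('e) * Delta_at Q \<gamma> s0"
    unfolding Delta_at_def by (intro mult_left_mono max.cobounded2) simp
  finally show ?thesis by blast
qed

lemma diag_deviation_mpow_le_Delta:
  fixes Q :: "real^'e^'e"
  assumes Q: "stochastic Q" and sym: "\<forall>i j. Q$i$j = Q$j$i" and "0 \<le> \<gamma>"
  shows "diag_deviation (cmat (mpow Q s)) \<le> 2 * real CARD('e) * Delta Q \<gamma>"
proof -
  have "diag_deviation (cmat (mpow Q s)) / (2 * real CARD('e)) \<le> Delta_at Q \<gamma> s0" for s0
  proof -
    obtain c where c: "(\<Sum>y\<in>UNIV. \<bar>mpow Q s $ y $ y - c\<bar>) \<le> real CARD('e) * Delta_at Q \<gamma> s0"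
      using diag_mpow_near_constant[OF assms] by blast
    have "diag_deviation (cmat (mpow Q s)) \<le> 2 * (\<Sum>y\<in>UNIV. norm (cmat (mpow Q s) $ y $ y - of_real c))"
      by (rule diag_deviation_le_twice_dist)
    also have "\<dots> = 2 * (\<Sum>y\<in>UNIV. \<bar>mpow Q s $ y $ y - c\<bar>)"
      by (simp add: cmat_def flip: of_real_diff)
    finally show ?thesis using c by (simp add: divide_le_eq mult_ac)
  qed
  then have "diag_deviation (cmat (mpow Q s)) / (2 * real CARD('e)) \<le> Delta Q \<gamma>"
    unfolding Delta_eq_INF_Delta_at by (intro cINF_greatest) auto
  then show ?thesis by (simp add: divide_le_eq mult_ac)
qed

definition entrywise_norm :: "complex^'e^'e \<Rightarrow> real" where
  "entrywise_norm C = (\<Sum>i\<in>UNIV. \<Sum>j\<in>UNIV. norm (C$i$j))"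

definition entry_sum :: "complex^'e^'e \<Rightarrow> complex" where
  "entry_sum C = (\<Sum>i\<in>UNIV. \<Sum>j\<in>UNIV. C$i$j)"

lemma entrywise_norm_add_le: "entrywise_norm (A + B) \<le> entrywise_norm A + entrywise_norm B"
  unfolding entrywise_norm_def by (simp add: sum.distrib[symmetric] sum_mono norm_triangle_ineq)

lemma entrywise_norm_sum_le: "entrywise_norm (\<Sum>k\<in>K. A k) \<le> (\<Sum>k\<in>K. entrywise_norm (A k))"
proof -
  have "entrywise_norm (\<Sum>k\<in>K. A k) \<le> (\<Sum>i\<in>UNIV. \<Sum>j\<in>UNIV. \<Sum>k\<in>K. norm (A k $ i $ j))"
    unfolding entrywise_norm_def by (intro sum_mono) (simp add: norm_sum)
  also have "\<dots> = (\<Sum>k\<in>K. entrywise_norm (A k))"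
    unfolding entrywise_norm_def by (simp add: sum.swap[of _ K])
  finally show ?thesis .
qed

lemma entrywise_norm_scaleR: "entrywise_norm (r *\<^sub>R A) = \<bar>r\<bar> * entrywise_norm A"
  unfolding entrywise_norm_def by (simp add: sum_distrib_left)

lemma entry_sum_sum: "entry_sum (\<Sum>k\<in>K. A k) = (\<Sum>k\<in>K. entry_sum (A k))"
  unfolding entry_sum_def sum_component by (simp add: sum.swap[of _ K])

lemma entry_sum_scaleR: "entry_sum (r *\<^sub>R A) = of_real r * entry_sum A"
  unfolding entry_sum_def vector_scaleR_component scaleR_conv_of_real[where 'a=complex] sum_distrib_left ..

lemma matrix_mult_add_left:
  fixes A B :: "'a::semiring_1^'n^'m"
  shows "(A + B) ** C = A ** C + B ** C"
  by (simp add: matrix_matrix_mult_def vec_eq_iff distrib_right sum.distrib)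

lemma matrix_mult_diff_left:
  fixes A B :: "'a::ring_1^'n^'m"
  shows "(A - B) ** C = A ** C - B ** C"
  by (simp add: matrix_matrix_mult_def vec_eq_iff left_diff_distrib sum_subtractf)

lemma matrix_mult_diff_right:
  fixes A B :: "'a::ring_1^'n^'m"
  shows "C ** (A - B) = C ** A - C ** B"
  by (simp add: matrix_matrix_mult_def vec_eq_iff right_diff_distrib sum_subtractf)

definition redirect :: "'e \<Rightarrow> 'e \<Rightarrow> 'e \<Rightarrow> 'e" where
  "redirect x y a = (if a = x then y else a)"

lemma Tmat_entry: "Tmat x y $ b $ j = (if redirect x y b = j then 1 else 0)"
  by (auto simp: Tmat_def ket_bra_def mat_def redirect_def)

(* T^* C T is the push-forward of C along redirect x y in both indices, so it keeps the sum of
   the entries and does not increase their l1-norm. *)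
lemma congruence_Tmat_entry:
  fixes C :: "complex^'e^'e"
  shows "(transpose (Tmat x y) ** C ** Tmat x y)$i$j =
    (\<Sum>a\<in>UNIV. \<Sum>b\<in>UNIV. if redirect x y a = i \<and> redirect x y b = j then C$a$b else 0)"
proof -
  have "(transpose (Tmat x y) ** C ** Tmat x y)$i$j =
      (\<Sum>b\<in>UNIV. \<Sum>a\<in>UNIV. Tmat x y $ a $ i * C$a$b * Tmat x y $ b $ j)"
    by (simp add: matrix_matrix_mult_def transpose_def sum_distrib_right)
  also have "\<dots> = (\<Sum>a\<in>UNIV. \<Sum>b\<in>UNIV. Tmat x y $ a $ i * C$a$b * Tmat x y $ b $ j)"
    by (rule sum.swap)
  also have "\<dots> = (\<Sum>a\<in>UNIV. \<Sum>b\<in>UNIV.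
      if redirect x y a = i \<and> redirect x y b = j then C$a$b else 0)"
    by (intro sum.cong refl) (simp add: Tmat_entry)
  finally show ?thesis .
qed

lemma sum_over_fibers:
  fixes f :: "'a::finite \<Rightarrow> 'b::finite" and g :: "'c::finite \<Rightarrow> 'd::finite"
    and h :: "'a \<Rightarrow> 'c \<Rightarrow> 'z::comm_monoid_add"
  shows "(\<Sum>i\<in>UNIV. \<Sum>j\<in>UNIV. \<Sum>a\<in>UNIV. \<Sum>b\<in>UNIV. if f a = i \<and> g b = j then h a b else 0)
    = (\<Sum>a\<in>UNIV. \<Sum>b\<in>UNIV. h a b)"
proof -
  have "(\<Sum>i\<in>UNIV. \<Sum>j\<in>UNIV. \<Sum>a\<in>UNIV. \<Sum>b\<in>UNIV. if f a = i \<and> g b = j then h a b else 0)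
      = (\<Sum>i\<in>UNIV. \<Sum>a\<in>UNIV. \<Sum>j\<in>UNIV. \<Sum>b\<in>UNIV. if f a = i \<and> g b = j then h a b else 0)"
    by (intro sum.cong refl sum.swap)
  also have "\<dots> = (\<Sum>a\<in>UNIV. \<Sum>i\<in>UNIV. \<Sum>b\<in>UNIV. \<Sum>j\<in>UNIV. if f a = i \<and> g b = j then h a b else 0)"
    by (subst sum.swap) (intro sum.cong refl sum.swap)
  also have "\<dots> = (\<Sum>a\<in>UNIV. \<Sum>i\<in>UNIV. if f a = i then \<Sum>b\<in>UNIV. h a b else 0)"
    by (intro sum.cong refl) (simp add: sum.delta if_distrib[of "\<lambda>x. \<Sum>j\<in>UNIV. x"] cong: if_cong)
  finally show ?thesis by simp
qed

lemma entry_sum_congruence_Tmat: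
  "entry_sum (transpose (Tmat x y) ** C ** Tmat x y) = entry_sum C"
  unfolding entry_sum_def congruence_Tmat_entry by (rule sum_over_fibers)

lemma entrywise_norm_congruence_Tmat_le:
  "entrywise_norm (transpose (Tmat x y) ** C ** Tmat x y) \<le> entrywise_norm C"
proof -
  have "entrywise_norm (transpose (Tmat x y) ** C ** Tmat x y) \<le> (\<Sum>i\<in>UNIV. \<Sum>j\<in>UNIV.
      \<Sum>a\<in>UNIV. \<Sum>b\<in>UNIV. if redirect x y a = i \<and> redirect x y b = j then norm (C$a$b) else 0)"
    unfolding entrywise_norm_def congruence_Tmat_entry
    by (intro sum_mono order_trans[OF norm_sum]) (simp add: if_distrib[where f=norm])
  also have "\<dots> = entrywise_norm C" unfolding entrywise_norm_def by (rule sum_over_fibers)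
  finally show ?thesis .
qed

lemma Lop_diff: "Lop Q (A - B) = Lop Q A - Lop Q B"
  unfolding Lop_def matrix_mult_diff_left matrix_mult_diff_right scaleR_diff_right sum_subtractf ..

lemma entrywise_norm_Lop_le:
  fixes Q :: "real^'e^'e"
  assumes Q: "stochastic Q"
  shows "entrywise_norm (Lop Q C) \<le> entrywise_norm C"
proof -
  have "entrywise_norm (Lop Q C) \<le> (\<Sum>x\<in>UNIV. \<Sum>y\<in>UNIV.
      entrywise_norm ((Q$x$y / real CARD('e)) *\<^sub>R (transpose (Tmat x y) ** C ** Tmat x y)))"
    unfolding Lop_def by (rule order_trans[OF entrywise_norm_sum_le sum_mono[OF entrywise_norm_sum_le]])
  also have "\<dots> \<le> (\<Sum>x\<in>UNIV. \<Sum>y\<in>UNIV. (Q$x$y / real CARD('e)) * entrywise_norm C)"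
  proof (intro sum_mono)
    fix x y
    have "0 \<le> Q$x$y / real CARD('e)" using Q by (simp add: stochastic_def)
    then show "entrywise_norm ((Q$x$y / real CARD('e)) *\<^sub>R (transpose (Tmat x y) ** C ** Tmat x y))
        \<le> (Q$x$y / real CARD('e)) * entrywise_norm C"
      unfolding entrywise_norm_scaleR abs_of_nonneg[OF \<open>0 \<le> Q$x$y / real CARD('e)\<close>]
      by (rule mult_left_mono[OF entrywise_norm_congruence_Tmat_le])
  qed
  also have "\<dots> = entrywise_norm C"
    using Q by (simp add: stochastic_def sum_divide_distrib[symmetric] sum_distrib_right[symmetric])
  finally show ?thesis .
qed

lemma entry_sum_Lop:
  fixes Q :: "real^'e^'e"
  assumes Q: "stochastic Q"
  shows "entry_sum (Lop Q C) = entry_sum C"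
proof -
  have "entry_sum (Lop Q C) = of_real (\<Sum>x\<in>UNIV. \<Sum>y\<in>UNIV. Q$x$y / real CARD('e)) * entry_sum C"
    unfolding Lop_def entry_sum_sum entry_sum_scaleR entry_sum_congruence_Tmat
    by (simp add: sum_distrib_right)
  also have "(\<Sum>x\<in>UNIV. \<Sum>y\<in>UNIV. Q$x$y / real CARD('e)) = 1"
    using Q by (simp add: stochastic_def sum_divide_distrib[symmetric])
  finally show ?thesis by simp
qed

lemma sum_redirect_fiber:
  fixes x y i :: "'e::finite"
  shows "(\<Sum>a\<in>UNIV. if redirect x y a = i then g a else 0)
    = (if i \<noteq> x then g i else 0) + (if i = y then g x else (0::'a::comm_monoid_add))"
proof -
  have "(\<Sum>a\<in>UNIV. if redirect x y a = i then g a else 0) =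
      (\<Sum>a\<in>UNIV. (if a = i then (if i \<noteq> x then g i else 0) else 0)
        + (if a = x then (if i = y then g x else 0) else 0))"
    by (intro sum.cong refl) (auto simp: redirect_def)
  then show ?thesis by (simp add: sum.distrib)
qed

lemma congruence_Tmat_entry_cases:
  fixes C :: "complex^'e^'e"
  shows "(transpose (Tmat x y) ** C ** Tmat x y)$i$j =
    (if i \<noteq> x \<and> j \<noteq> x then C$i$j else 0) + (if i \<noteq> x \<and> j = y then C$i$x else 0) +
    (if i = y \<and> j \<noteq> x then C$x$j else 0) + (if i = y \<and> j = y then C$x$x else 0)"
proof -
  have "(transpose (Tmat x y) ** C ** Tmat x y)$i$j = (\<Sum>a\<in>UNIV.
      if redirect x y a = i then (\<Sum>b\<in>UNIV. if redirect x y b = j then C$a$b else 0) else 0)"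
    unfolding congruence_Tmat_entry by (intro sum.cong refl) auto
  then show ?thesis unfolding sum_redirect_fiber by auto
qed

lemma Lop_entry:
  fixes Q :: "real^'e^'e"
  shows "Lop Q C $ i $ j = (\<Sum>x\<in>UNIV. \<Sum>y\<in>UNIV. cmat Q$x$y *
   ((if i \<noteq> x \<and> j \<noteq> x then C$i$j else 0) + (if i \<noteq> x \<and> j = y then C$i$x else 0) +
   (if i = y \<and> j \<noteq> x then C$x$j else 0) + (if i = y \<and> j = y then C$x$x else 0))) / of_nat CARD('e)"
  unfolding Lop_def sum_component vector_scaleR_component congruence_Tmat_entry_cases
    scaleR_conv_of_real[where 'a=complex] sum_divide_distrib
  by (intro sum.cong refl) (simp add: cmat_def)

lemma weighted_sum_fixing_entry:
  fixes W :: "'a::field^'e^'e"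
  assumes rows: "\<And>x. (\<Sum>y\<in>UNIV. W$x$y) = 1"
  shows "(\<Sum>x\<in>UNIV. \<Sum>y\<in>UNIV. W$x$y * (if i \<noteq> x \<and> j \<noteq> x then c else 0))
    = c * (of_nat CARD('e) - 2 + (if i = j then 1 else 0))"
proof -
  have "(\<Sum>x\<in>UNIV. \<Sum>y\<in>UNIV. W$x$y * (if i \<noteq> x \<and> j \<noteq> x then c else 0))
      = (\<Sum>x\<in>UNIV. c - (if x = i then c else 0) - (if x = j then c else 0)
          + (if x = i then (if i = j then c else 0) else 0))"
    by (intro sum.cong refl) (auto simp: sum_distrib_right[symmetric] rows)
  also have "\<dots> = c * (of_nat CARD('e) - 2 + (if i = j then 1 else 0))"
    by (simp add: sum.distrib sum_subtractf algebra_simps)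
  finally show ?thesis .
qed

lemma weighted_sum_right_move:
  fixes W C :: "'a::comm_ring_1^'e^'e"
  shows "(\<Sum>x\<in>UNIV. \<Sum>y\<in>UNIV. W$x$y * (if i \<noteq> x \<and> j = y then C$i$x else 0))
    = (C ** W)$i$j - C$i$i * W$i$j"
proof -
  have "(\<Sum>x\<in>UNIV. \<Sum>y\<in>UNIV. W$x$y * (if i \<noteq> x \<and> j = y then C$i$x else 0))
      = (\<Sum>x\<in>UNIV. C$i$x * W$x$j - (if x = i then C$i$i * W$i$j else 0))"
    by (intro sum.cong refl) (auto simp: if_distrib[of "\<lambda>v. _ * v"] cong: if_cong)
  then show ?thesis by (simp add: sum_subtractf matrix_matrix_mult_def)
qed

lemma weighted_sum_left_move:
  fixes W C :: "'a::comm_ring_1^'e^'e"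
  shows "(\<Sum>x\<in>UNIV. \<Sum>y\<in>UNIV. W$x$y * (if i = y \<and> j \<noteq> x then C$x$j else 0))
    = (transpose W ** C)$i$j - W$j$i * C$j$j"
proof -
  have "(\<Sum>x\<in>UNIV. \<Sum>y\<in>UNIV. W$x$y * (if i = y \<and> j \<noteq> x then C$x$j else 0))
      = (\<Sum>x\<in>UNIV. W$x$i * C$x$j - (if x = j then W$j$i * C$j$j else 0))"
    by (intro sum.cong refl) (auto simp: if_distrib[of "\<lambda>v. _ * v"] cong: if_cong)
  then show ?thesis by (simp add: sum_subtractf matrix_matrix_mult_def transpose_def)
qed

lemma weighted_sum_diagonal:
  fixes W C :: "'a::comm_ring_1^'e^'e"
  shows "(\<Sum>x\<in>UNIV. \<Sum>y\<in>UNIV. W$x$y * (if i = y \<and> j = y then C$x$x else 0))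
    = (if i = j then \<Sum>x\<in>UNIV. W$x$i * C$x$x else 0)"
proof -
  have "W$x$y * (if i = y \<and> j = y then C$x$x else 0)
      = (if i = j then (if y = i then W$x$i * C$x$x else 0) else 0)" for x y
    by auto
  then show ?thesis by (simp add: sum.delta')
qed

lemma stochastic_trace_zero_diag:
  assumes "stochastic Q" and "trace Q = 0"
  shows "Q$x$x = 0"
  using assms by (simp add: stochastic_def trace_def sum_nonneg_eq_0_iff)

lemma cmat_row_sum:
  assumes "stochastic Q"
  shows "(\<Sum>y\<in>UNIV. cmat Q$x$y) = 1"
proof -
  have "(\<Sum>y\<in>UNIV. cmat Q$x$y) = of_real (\<Sum>y\<in>UNIV. Q$x$y)" by (simp add: cmat_def)
  also have "\<dots> = 1" using assms by (simp add: stochastic_def)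
  finally show ?thesis .
qed

lemma cmat_symmetric:
  assumes "\<forall>i j. Q$i$j = Q$j$i"
  shows "cmat Q$i$j = cmat Q$j$i"
  using assms by (simp add: cmat_def)

lemma Lop_entry_closed_form:
  fixes Q :: "real^'e^'e"
  assumes Q: "stochastic Q" and sym: "\<forall>i j. Q$i$j = Q$j$i"
  shows "Lop Q C $ i $ j = (C$i$j * (of_nat CARD('e) - 2 + (if i = j then 1 else 0))
     + ((C ** cmat Q)$i$j - C$i$i * cmat Q$i$j)
     + ((cmat Q ** C)$i$j - cmat Q$i$j * C$j$j)
     + (if i = j then \<Sum>x\<in>UNIV. cmat Q$i$x * C$x$x else 0)) / of_nat CARD('e)"
proof -
  have "transpose (cmat Q) = cmat Q"
    using cmat_symmetric[OF sym] by (simp add: transpose_def vec_eq_iff)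
  then show ?thesis
    unfolding Lop_entry distrib_left sum.distrib weighted_sum_fixing_entry[OF cmat_row_sum[OF Q]]
      weighted_sum_right_move weighted_sum_left_move weighted_sum_diagonal
    using cmat_symmetric[OF sym] by simp
qed

definition L_defect :: "real^'e^'e \<Rightarrow> complex^'e^'e \<Rightarrow> complex^'e^'e" where
  "L_defect Q C = (\<chi> i j. ((if i = j then diag_offset C i + (\<Sum>x\<in>UNIV. cmat Q$i$x * diag_offset C x) else 0)
      - cmat Q$i$j * (diag_offset C i + diag_offset C j)) / of_nat CARD('e))"

lemma Lop_eq_L0op_plus_L_defect:
  fixes Q :: "real^'e^'e"
  assumes Q: "stochastic Q" and sym: "\<forall>i j. Q$i$j = Q$j$i" and tr: "trace Q = 0"
  shows "Lop Q C = L0op Q C + L_defect Q C"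
proof -
  define N where "N = (of_nat CARD('e) :: complex)"
  have N: "N \<noteq> 0" by (simp add: N_def)
  have diag: "cmat Q$i$i = 0" for i using stochastic_trace_zero_diag[OF Q tr] by (simp add: cmat_def)
  have offsets: "(\<Sum>x\<in>UNIV. cmat Q$i$x * diag_offset C x)
      = (\<Sum>x\<in>UNIV. cmat Q$i$x * C$x$x) - trace C / N" for i
    unfolding diag_offset_def right_diff_distrib sum_subtractf sum_distrib_right[symmetric]
    by (simp add: cmat_row_sum[OF Q] N_def)
  have "Lop Q C $ i $ j = (L0op Q C + L_defect Q C) $ i $ j" for i j
  proof (cases "i = j")
    case True
    have "Lop Q C $ i $ j = C$i$i * (N - 1) / N + (C ** cmat Q)$i$i / N + (cmat Q ** C)$i$i / N
        + (\<Sum>x\<in>UNIV. cmat Q$i$x * C$x$x) / N"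
      unfolding Lop_entry_closed_form[OF Q sym] using True by (simp add: diag N_def add_divide_distrib)
    also have "\<dots> = (L0op Q C + L_defect Q C) $ i $ j"
      unfolding L0op_def L_defect_def Let_def vector_add_component vec_lambda_beta True
        N_def[symmetric] offsets
      unfolding diag_offset_def N_def[symmetric]
      using N by (simp add: diag mat_def field_simps power2_eq_square)
    finally show ?thesis .
  next
    case False
    have lop: "Lop Q C $ i $ j = C$i$j * (N - 2) / N + ((C ** cmat Q)$i$j - C$i$i * cmat Q$i$j) / N
        + ((cmat Q ** C)$i$j - cmat Q$i$j * C$j$j) / N"
      unfolding Lop_entry_closed_form[OF Q sym] using False by (simp add: N_def add_divide_distrib)
    have l0: "L0op Q C $ i $ j = (N - 2) / N * C$i$j
        + 1 / N * ((C ** cmat Q)$i$j + (cmat Q ** C)$i$j) - 2 * trace C / N^2 * cmat Q$i$j"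
      using False by (simp add: L0op_def Let_def mat_def N_def)
    have defect: "L_defect Q C $ i $ j
        = - (cmat Q$i$j * (C$i$i - trace C / N + (C$j$j - trace C / N))) / N"
      using False by (simp add: L_defect_def diag_offset_def N_def)
    have "c * (N - 2) / N + (a - ci * q) / N + (b - q * cj) / N = ((N - 2) / N * c
        + 1 / N * (a + b) - 2 * t / N^2 * q) + - (q * (ci - t / N + (cj - t / N))) / N"
      for a b c ci cj q t
      using N by (simp add: field_simps power2_eq_square)
    then show ?thesis unfolding vector_add_component lop l0 defect .
  qed
  then show ?thesis by (simp add: vec_eq_iff)
qed

lemma entry_sum_mult_cmat:
  fixes Q :: "real^'e^'e"
  assumes Q: "stochastic Q" and sym: "\<forall>i j. Q$i$j = Q$j$i"
  shows "entry_sum (C ** cmat Q) = entry_sum C" and "entry_sum (cmat Q ** C) = entry_sum C"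
proof -
  have "entry_sum (C ** cmat Q) = (\<Sum>i\<in>UNIV. \<Sum>j\<in>UNIV. \<Sum>k\<in>UNIV. C$i$k * cmat Q$k$j)"
    by (simp add: entry_sum_def matrix_matrix_mult_def)
  also have "\<dots> = (\<Sum>i\<in>UNIV. \<Sum>k\<in>UNIV. C$i$k * (\<Sum>j\<in>UNIV. cmat Q$k$j))"
    unfolding sum_distrib_left by (intro sum.cong refl sum.swap)
  finally show "entry_sum (C ** cmat Q) = entry_sum C" by (simp add: cmat_row_sum[OF Q] entry_sum_def)
  have "entry_sum (cmat Q ** C) = (\<Sum>i\<in>UNIV. \<Sum>j\<in>UNIV. \<Sum>k\<in>UNIV. cmat Q$i$k * C$k$j)"
    by (simp add: entry_sum_def matrix_matrix_mult_def)
  also have "\<dots> = (\<Sum>k\<in>UNIV. \<Sum>i\<in>UNIV. \<Sum>j\<in>UNIV. cmat Q$i$k * C$k$j)"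
    by (subst sum.swap) (intro sum.cong refl sum.swap)
  also have "\<dots> = (\<Sum>k\<in>UNIV. (\<Sum>i\<in>UNIV. cmat Q$k$i) * (\<Sum>j\<in>UNIV. C$k$j))"
    using cmat_symmetric[OF sym] by (simp add: sum_product)
  finally show "entry_sum (cmat Q ** C) = entry_sum C" by (simp add: cmat_row_sum[OF Q] entry_sum_def)
qed

lemma entry_sum_L0op:
  fixes Q :: "real^'e^'e"
  assumes Q: "stochastic Q" and sym: "\<forall>i j. Q$i$j = Q$j$i"
  shows "entry_sum (L0op Q C) = entry_sum C"
proof -
  define N where "N = (of_nat CARD('e) :: complex)"
  have N: "N \<noteq> 0" by (simp add: N_def)
  have "entry_sum (cmat Q) = N" using cmat_row_sum[OF Q] by (simp add: entry_sum_def N_def)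
  moreover have "entry_sum (mat 1 :: complex^'e^'e) = N" by (simp add: entry_sum_def N_def mat_def)
  moreover have "entry_sum (L0op Q C) = (N - 2) / N * entry_sum C
      + 1 / N * (entry_sum (C ** cmat Q) + entry_sum (cmat Q ** C))
      - 2 * trace C / N^2 * entry_sum (cmat Q) + 2 * trace C / N^2 * entry_sum (mat 1 :: complex^'e^'e)"
    unfolding L0op_def Let_def entry_sum_def N_def[symmetric]
    by (simp add: sum.distrib sum_subtractf sum_distrib_left sum_divide_distrib add_divide_distrib)
  ultimately show ?thesis
    using N by (simp add: entry_sum_mult_cmat[OF Q sym] field_simps power2_eq_square)
qed

lemma trace_L0op:
  fixes Q :: "real^'e^'e"
  assumes "trace Q = 0"
  shows "trace (L0op Q C) = trace C + 2 / of_nat CARD('e) * trace (C ** cmat Q)"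
proof -
  define N where "N = (of_nat CARD('e) :: complex)"
  have N: "N \<noteq> 0" by (simp add: N_def)
  have "trace (cmat Q) = 0" using assms by (simp add: trace_def cmat_def flip: of_real_sum)
  moreover have "trace (mat 1 :: complex^'e^'e) = N" by (simp add: trace_I N_def)
  moreover have "trace (L0op Q C) = (N - 2) / N * trace C
      + 1 / N * (trace (C ** cmat Q) + trace (cmat Q ** C))
      - 2 * trace C / N^2 * trace (cmat Q) + 2 * trace C / N^2 * trace (mat 1 :: complex^'e^'e)"
    unfolding L0op_def Let_def trace_def N_def[symmetric]
    by (simp add: sum.distrib sum_subtractf sum_distrib_left sum_divide_distrib add_divide_distrib)
  ultimately show ?thesis
    using N by (simp add: trace_mul_sym[of "cmat Q" C] N_def field_simps power2_eq_square)
qed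

lemma trace_L_defect:
  fixes Q :: "real^'e^'e"
  assumes Q: "stochastic Q" and sym: "\<forall>i j. Q$i$j = Q$j$i" and tr: "trace Q = 0"
  shows "trace (L_defect Q C) = 0"
proof -
  have sum_offsets: "(\<Sum>x\<in>UNIV. diag_offset C x) = 0"
    by (simp add: diag_offset_def sum_subtractf trace_def)
  have "(\<Sum>i\<in>UNIV. \<Sum>x\<in>UNIV. cmat Q$i$x * diag_offset C x)
      = (\<Sum>x\<in>UNIV. \<Sum>i\<in>UNIV. cmat Q$x$i * diag_offset C x)"
    using cmat_symmetric[OF sym] by (subst sum.swap) simp
  also have "\<dots> = (\<Sum>x\<in>UNIV. (\<Sum>i\<in>UNIV. cmat Q$x$i) * diag_offset C x)"
    by (simp add: sum_distrib_right)
  also have "\<dots> = 0" using sum_offsets by (simp add: cmat_row_sum[OF Q])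
  finally have "(\<Sum>i\<in>UNIV. \<Sum>x\<in>UNIV. cmat Q$i$x * diag_offset C x) = 0" .
  moreover have "cmat Q$i$i = 0" for i using stochastic_trace_zero_diag[OF Q tr] by (simp add: cmat_def)
  ultimately show ?thesis
    using sum_offsets by (simp add: trace_def L_defect_def sum_divide_distrib[symmetric] sum.distrib)
qed

lemma trace_Lop:
  fixes Q :: "real^'e^'e"
  assumes Q: "stochastic Q" and sym: "\<forall>i j. Q$i$j = Q$j$i" and tr: "trace Q = 0"
  shows "trace (Lop Q C) = trace C + 2 / of_nat CARD('e) * trace (C ** cmat Q)"
  by (simp add: Lop_eq_L0op_plus_L_defect[OF assms] trace_add trace_L0op[OF tr] trace_L_defect[OF assms])

lemma norm_L_defect_entry_le:
  fixes Q :: "real^'e^'e"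
  assumes Q: "stochastic Q"
  shows "norm (L_defect Q C $ i $ j) \<le> ((if i = j then norm (diag_offset C i)
      + (\<Sum>x\<in>UNIV. Q$i$x * norm (diag_offset C x)) else 0)
      + Q$i$j * (norm (diag_offset C i) + norm (diag_offset C j))) / real CARD('e)"
proof -
  let ?d = "diag_offset C"
  have norm_cmat: "norm (cmat Q$x$y) = Q$x$y" for x y using Q by (simp add: cmat_def stochastic_def)
  have "norm (\<Sum>x\<in>UNIV. cmat Q$i$x * ?d x) \<le> (\<Sum>x\<in>UNIV. Q$i$x * norm (?d x))"
    by (rule order_trans[OF norm_sum]) (simp add: norm_mult norm_cmat)
  then have diag: "norm (if i = j then ?d i + (\<Sum>x\<in>UNIV. cmat Q$i$x * ?d x) else 0)
      \<le> (if i = j then norm (?d i) + (\<Sum>x\<in>UNIV. Q$i$x * norm (?d x)) else 0)"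
    using norm_triangle_ineq[of "?d i" "\<Sum>x\<in>UNIV. cmat Q$i$x * ?d x"] by auto
  have off: "norm (cmat Q$i$j * (?d i + ?d j)) \<le> Q$i$j * (norm (?d i) + norm (?d j))"
    using Q by (simp add: norm_mult norm_cmat stochastic_def mult_left_mono norm_triangle_ineq)
  have "norm (L_defect Q C $ i $ j) = norm ((if i = j then ?d i + (\<Sum>x\<in>UNIV. cmat Q$i$x * ?d x) else 0)
      - cmat Q$i$j * (?d i + ?d j)) / real CARD('e)"
    by (simp add: L_defect_def norm_divide)
  also have "\<dots> \<le> ((if i = j then norm (?d i) + (\<Sum>x\<in>UNIV. Q$i$x * norm (?d x)) else 0)
      + Q$i$j * (norm (?d i) + norm (?d j))) / real CARD('e)"
    by (intro divide_right_mono order_trans[OF norm_triangle_ineq4] add_mono diag off) simp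
  finally show ?thesis .
qed

lemma entrywise_norm_L_defect_le:
  fixes Q :: "real^'e^'e"
  assumes Q: "stochastic Q" and sym: "\<forall>i j. Q$i$j = Q$j$i"
  shows "entrywise_norm (L_defect Q C) \<le> 4 * diag_deviation C / real CARD('e)"
proof -
  define d where "d x = norm (diag_offset C x)" for x
  have rows: "(\<Sum>y\<in>UNIV. Q$x$y * c) = c" for x c
    using Q by (simp add: stochastic_def sum_distrib_right[symmetric])
  have cols: "(\<Sum>x\<in>UNIV. Q$x$y * c) = c" for y c
    using rows[of y c] sym by simp
  have "entrywise_norm (L_defect Q C) \<le> (\<Sum>i\<in>UNIV. \<Sum>j\<in>UNIV.
      ((if i = j then d i + (\<Sum>x\<in>UNIV. Q$i$x * d x) else 0) + Q$i$j * (d i + d j)) / real CARD('e))"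
    unfolding entrywise_norm_def d_def by (intro sum_mono norm_L_defect_entry_le[OF Q])
  also have "\<dots> = ((\<Sum>i\<in>UNIV. d i) + 2 * (\<Sum>i\<in>UNIV. \<Sum>x\<in>UNIV. Q$i$x * d x)
      + (\<Sum>i\<in>UNIV. \<Sum>j\<in>UNIV. Q$i$j * d i)) / real CARD('e)"
    by (simp add: sum_divide_distrib[symmetric] sum.distrib distrib_left sum_distrib_left)
  also have "(\<Sum>i\<in>UNIV. \<Sum>x\<in>UNIV. Q$i$x * d x) = (\<Sum>x\<in>UNIV. d x)"
    by (subst sum.swap) (simp add: cols)
  also have "(\<Sum>i\<in>UNIV. \<Sum>j\<in>UNIV. Q$i$j * d i) = (\<Sum>x\<in>UNIV. d x)" by (simp add: rows)
  finally show ?thesis by (simp add: diag_deviation_def d_def)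
qed

lemma norm_trace_mult_cmat_le:
  fixes Q :: "real^'e^'e"
  assumes Q: "stochastic Q"
  shows "norm (trace (D ** cmat Q)) \<le> entrywise_norm D"
proof -
  have "norm (trace (D ** cmat Q)) \<le> (\<Sum>i\<in>UNIV. \<Sum>k\<in>UNIV. norm (D$i$k) * Q$k$i)"
    unfolding trace_def matrix_matrix_mult_def
    using Q by (auto simp: norm_mult cmat_def stochastic_def intro!: order_trans[OF norm_sum] sum_mono)
  also have "\<dots> \<le> entrywise_norm D"
    unfolding entrywise_norm_def
    by (intro sum_mono mult_right_le_one_le) (auto simp: stochastic_entry_le_1[OF Q] stochastic_def Q[unfolded stochastic_def])
  finally show ?thesis .
qed

lemma bernoulli_weight_sum_containing_pair:
  fixes x y :: "'e::finite" and u :: real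
  shows "(\<Sum>B\<in>Pow (UNIV::'e set). if x \<in> B \<and> y \<in> B then u ^ card B * (1 - u) ^ (CARD('e) - card B) else 0)
     = u ^ card {x, y}"
proof -
  define g where "g a = (if a \<in> {x, y} then 0 else 1 - u)" for a
  have "(\<Prod>a\<in>UNIV. u + g a) = (\<Sum>X\<in>Pow UNIV. (\<Prod>a\<in>X. u) * (\<Prod>a\<in>UNIV - X. g a))"
    by (rule prod_add) simp
  also have "\<dots> = (\<Sum>B\<in>Pow (UNIV::'e set). if x \<in> B \<and> y \<in> B then u ^ card B * (1 - u) ^ (CARD('e) - card B) else 0)"
  proof (intro sum.cong refl)
    fix X :: "'e set"
    show "(\<Prod>a\<in>X. u) * (\<Prod>a\<in>UNIV - X. g a) =
        (if x \<in> X \<and> y \<in> X then u ^ card X * (1 - u) ^ (CARD('e) - card X) else 0)"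
    proof (cases "x \<in> X \<and> y \<in> X")
      case True
      have "(\<Prod>a\<in>UNIV - X. g a) = (\<Prod>a\<in>UNIV - X. 1 - u)"
        using True by (intro prod.cong refl) (auto simp: g_def)
      also have "\<dots> = (1 - u) ^ (CARD('e) - card X)"
        by (simp add: card_Diff_subset)
      finally show ?thesis using True by simp
    next
      case False
      then obtain a where "a \<in> UNIV - X" "g a = 0" by (auto simp: g_def)
      hence pz: "(\<Prod>a\<in>UNIV - X. g a) = 0" by (intro prod_zero) auto
      show ?thesis using False by (subst pz) auto
    qed
  qed
  finally have expand: "(\<Prod>a\<in>UNIV. u + g a) = (\<Sum>B\<in>Pow (UNIV::'e set). if x \<in> B \<and> y \<in> B then u ^ card B * (1 - u) ^ (CARD('e) - card B) else 0)" .
  have "(\<Prod>a\<in>UNIV. u + g a) = (\<Prod>a\<in>UNIV. if a \<in> {x, y} then u else 1)"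
    by (intro prod.cong refl) (auto simp: g_def)
  also have "\<dots> = (\<Prod>a\<in>UNIV \<inter> {a. a \<in> {x, y}}. u) * (\<Prod>a\<in>UNIV \<inter> - {a. a \<in> {x, y}}. 1)"
    by (rule prod.If_cases) simp
  also have "\<dots> = u ^ card {x, y}"
  proof -
    have e: "UNIV \<inter> {a. a \<in> {x, y}} = {x, y}" by auto
    show ?thesis unfolding e by simp
  qed
  finally show ?thesis using expand by simp
qed

lemma S_beta_eq:
  fixes C :: "complex^'e^'e"
  shows "S_beta u C = of_real (u^2) * entry_sum C + of_real (u - u^2) * trace C"
proof -
  define w where "w B = complex_of_real (u ^ card B * (1 - u) ^ (CARD('e) - card B))" for B :: "'e set"
  have inB: "(\<Sum>x\<in>B. f x) = (\<Sum>x\<in>UNIV. if x \<in> B then f x else 0)" for B :: "'e set" and f :: "'e \<Rightarrow> complex"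
    by (simp add: sum.If_cases)
  have "S_beta u C = (\<Sum>B\<in>Pow UNIV. \<Sum>x\<in>UNIV. \<Sum>y\<in>UNIV. w B * (if x \<in> B \<and> y \<in> B then C$x$y else 0))"
    unfolding S_beta_def w_def[symmetric]
  proof (intro sum.cong refl)
    fix B :: "'e set"
    have "(\<Sum>x\<in>B. \<Sum>y\<in>B. C$x$y) = (\<Sum>x\<in>UNIV. \<Sum>y\<in>UNIV. if x \<in> B \<and> y \<in> B then C$x$y else 0)"
      unfolding inB[where B=B] by (intro sum.cong refl) auto
    thus "w B * (\<Sum>x\<in>B. \<Sum>y\<in>B. C$x$y) = (\<Sum>x\<in>UNIV. \<Sum>y\<in>UNIV. w B * (if x \<in> B \<and> y \<in> B then C$x$y else 0))"
      by (simp add: sum_distrib_left)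
  qed
  also have "\<dots> = (\<Sum>x\<in>UNIV. \<Sum>y\<in>UNIV. \<Sum>B\<in>Pow UNIV. w B * (if x \<in> B \<and> y \<in> B then C$x$y else 0))"
    by (subst sum.swap) (intro sum.cong refl sum.swap)
  also have "\<dots> = (\<Sum>x\<in>UNIV. \<Sum>y\<in>UNIV. C$x$y * of_real (u ^ card {x, y}))"
  proof (intro sum.cong refl)
    fix x y
    have "(\<Sum>B\<in>Pow UNIV. w B * (if x \<in> B \<and> y \<in> B then C$x$y else 0)) =
       C$x$y * of_real (\<Sum>B\<in>Pow (UNIV::'e set). if x \<in> B \<and> y \<in> B then u ^ card B * (1 - u) ^ (CARD('e) - card B) else 0)"
    proof -
      have "(\<Sum>B\<in>Pow UNIV. w B * (if x \<in> B \<and> y \<in> B then C$x$y else 0)) =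
         (\<Sum>B\<in>Pow UNIV. C$x$y * of_real (if x \<in> B \<and> y \<in> B then u ^ card B * (1 - u) ^ (CARD('e) - card B) else 0))"
        by (intro sum.cong refl) (simp add: w_def)
      also have "\<dots> = C$x$y * of_real (\<Sum>B\<in>Pow (UNIV::'e set). if x \<in> B \<and> y \<in> B then u ^ card B * (1 - u) ^ (CARD('e) - card B) else 0)"
        unfolding of_real_sum sum_distrib_left ..
      finally show ?thesis .
    qed
    thus "(\<Sum>B\<in>Pow UNIV. w B * (if x \<in> B \<and> y \<in> B then C$x$y else 0)) = C$x$y * of_real (u ^ card {x, y})"
      unfolding bernoulli_weight_sum_containing_pair .
  qed
  also have "\<dots> = (\<Sum>x\<in>UNIV. \<Sum>y\<in>UNIV. of_real (u^2) * C$x$y + (if x = y then of_real (u - u^2) * C$x$x else 0))"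
    by (intro sum.cong refl) (auto simp: power2_eq_square algebra_simps)
  also have "\<dots> = of_real (u^2) * entry_sum C + of_real (u - u^2) * trace C"
    by (simp add: sum.distrib sum_distrib_left entry_sum_def trace_def)
  finally show ?thesis .
qed

definition mpow_comb :: "real^'e^'e \<Rightarrow> (nat \<Rightarrow> complex) \<Rightarrow> nat \<Rightarrow> complex^'e^'e" where
  "mpow_comb Q c k = (\<chi> i j. \<Sum>s\<le>k. c s * cmat (mpow Q s) $ i $ j)"

(* L0 maps J + sum_s c_s Q^s to J + sum_s c'_s Q^s with c' = coeff_step N (trace C) c: the terms
   C Q and Q C shift the exponent by one, and the trace terms contribute to Q^0 = I and Q^1. *)
definition coeff_step :: "nat \<Rightarrow> complex \<Rightarrow> (nat \<Rightarrow> complex) \<Rightarrow> nat \<Rightarrow> complex" where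
  "coeff_step n t c s = (of_nat n - 2) / of_nat n * c s + (if s = 0 then 0 else 2 / of_nat n * c (s - 1))
     + 2 * t / (of_nat n)^2 * ((if s = 0 then 1 else 0) - (if s = 1 then 1 else 0))"

primrec L0_coeff :: "real^'e^'e \<Rightarrow> nat \<Rightarrow> nat \<Rightarrow> complex" where
  "L0_coeff Q 0 s = 0"
| "L0_coeff Q (Suc k) s = coeff_step CARD('e) (trace ((L0op Q ^^ k) Jmat)) (L0_coeff Q k) s"

lemma L0_coeff_eq_0: "k < s \<Longrightarrow> L0_coeff Q k s = 0"
  by (induction k arbitrary: s) (simp_all add: coeff_step_def)

lemma cmat_mult: "cmat (A ** B) = cmat A ** cmat B"
  by (simp add: cmat_def matrix_matrix_mult_def vec_eq_iff)

lemma Jmat_entry: "(Jmat :: complex^'e^'e) $ i $ j = 1 / of_nat CARD('e)"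
  by (simp add: Jmat_def)

lemma Jmat_mult_cmat:
  fixes Q :: "real^'e^'e"
  assumes Q: "stochastic Q" and sym: "\<forall>i j. Q$i$j = Q$j$i"
  shows "Jmat ** cmat Q = Jmat" and "cmat Q ** Jmat = Jmat"
proof -
  have "(\<Sum>l\<in>UNIV. cmat Q $ l $ j) = 1" for j
    using cmat_row_sum[OF Q, of j] cmat_symmetric[OF sym] by simp
  then show "Jmat ** cmat Q = Jmat"
    by (simp add: vec_eq_iff matrix_matrix_mult_def Jmat_entry sum_divide_distrib[symmetric])
  show "cmat Q ** Jmat = Jmat"
    by (simp add: vec_eq_iff matrix_matrix_mult_def Jmat_entry sum_divide_distrib[symmetric]
        cmat_row_sum[OF Q])
qed

lemma mpow_comb_mult_cmat:
  "mpow_comb Q c k ** cmat Q = (\<chi> i j. \<Sum>s\<le>k. c s * cmat (mpow Q (Suc s)) $ i $ j)"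
  "cmat Q ** mpow_comb Q c k = (\<chi> i j. \<Sum>s\<le>k. c s * cmat (mpow Q (Suc s)) $ i $ j)"
proof -
  have "mpow_comb Q c k ** cmat Q = (\<chi> i j. \<Sum>s\<le>k. c s * (cmat (mpow Q s) ** cmat Q) $ i $ j)"
    unfolding mpow_comb_def matrix_matrix_mult_def
    by (simp add: sum_distrib_left sum_distrib_right mult_ac sum.swap[of _ "{..k}"])
  then show "mpow_comb Q c k ** cmat Q = (\<chi> i j. \<Sum>s\<le>k. c s * cmat (mpow Q (Suc s)) $ i $ j)"
    by (simp add: cmat_mult[symmetric] mpow_Suc)
  have "cmat Q ** mpow_comb Q c k = (\<chi> i j. \<Sum>s\<le>k. c s * (cmat Q ** cmat (mpow Q s)) $ i $ j)"
    unfolding mpow_comb_def matrix_matrix_mult_def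
    by (simp add: sum_distrib_left mult_ac sum.swap[of _ "{..k}"])
  then show "cmat Q ** mpow_comb Q c k = (\<chi> i j. \<Sum>s\<le>k. c s * cmat (mpow Q (Suc s)) $ i $ j)"
    by (simp add: cmat_mult[symmetric] mpow_Suc_left)
qed

lemma L0op_Jmat_plus_mpow_comb:
  fixes Q :: "real^'e^'e"
  assumes Q: "stochastic Q" and sym: "\<forall>i j. Q$i$j = Q$j$i" and top: "c (Suc k) = 0"
  shows "L0op Q (Jmat + mpow_comb Q c k)
    = Jmat + mpow_comb Q (coeff_step CARD('e) (trace (Jmat + mpow_comb Q c k)) c) (Suc k)"
proof -
  define N where "N = (of_nat CARD('e) :: complex)"
  have N: "N \<noteq> 0" by (simp add: N_def)
  define t where "t = trace (Jmat + mpow_comb Q c k)"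
  have "L0op Q (Jmat + mpow_comb Q c k) $ i $ j
      = (Jmat + mpow_comb Q (coeff_step CARD('e) t c) (Suc k)) $ i $ j" for i j
  proof -
    define A where "A s = cmat (mpow Q s) $ i $ j" for s
    define S0 where "S0 = (\<Sum>s\<le>k. c s * A s)"
    define S1 where "S1 = (\<Sum>s\<le>k. c s * A (Suc s))"
    have entry: "(Jmat + mpow_comb Q c k) $ i $ j = 1 / N + S0"
      by (simp add: mpow_comb_def Jmat_entry N_def S0_def A_def)
    have prod: "((Jmat + mpow_comb Q c k) ** cmat Q) $ i $ j = 1 / N + S1"
      "(cmat Q ** (Jmat + mpow_comb Q c k)) $ i $ j = 1 / N + S1"
      by (simp_all add: matrix_mult_add_left matrix_add_ldistrib Jmat_mult_cmat[OF Q sym]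
          mpow_comb_mult_cmat Jmat_entry N_def S1_def A_def)
    have A01: "A 0 = (mat 1 :: complex^'e^'e) $ i $ j" "A 1 = cmat Q $ i $ j"
      by (simp add: A_def cmat_def mat_def) (simp add: A_def mpow_Suc)
    have lhs: "L0op Q (Jmat + mpow_comb Q c k) $ i $ j = (N - 2) / N * (1 / N + S0)
        + 1 / N * (2 / N + 2 * S1) - 2 * t / N^2 * A 1 + 2 * t / N^2 * A 0"
      unfolding A01 L0op_def Let_def N_def[symmetric] t_def[symmetric] vec_lambda_beta entry prod
      by (simp add: N_def)
    have "(\<Sum>s\<le>Suc k. coeff_step CARD('e) t c s * A s)
        = (N - 2) / N * (\<Sum>s\<le>Suc k. c s * A s)
          + (\<Sum>s\<le>Suc k. (if s = 0 then 0 else 2 / N * c (s - 1)) * A s)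
          + 2 * t / N^2 * (\<Sum>s\<le>Suc k. ((if s = 0 then 1 else 0) - (if s = 1 then 1 else 0)) * A s)"
      unfolding coeff_step_def N_def[symmetric] distrib_right sum.distrib sum_distrib_left
      by (simp add: mult_ac)
    also have "(\<Sum>s\<le>Suc k. c s * A s) = S0" using top by (simp add: S0_def)
    also have "(\<Sum>s\<le>Suc k. (if s = 0 then 0 else 2 / N * c (s - 1)) * A s) = 2 / N * S1"
      unfolding sum.atMost_Suc_shift by (simp add: S1_def sum_distrib_left mult_ac)
    also have "(\<Sum>s\<le>Suc k. ((if s = 0 then 1 else 0) - (if s = 1 then 1 else 0)) * A s) = A 0 - A 1"
      by (simp add: left_diff_distrib sum_subtractf if_distrib[of "\<lambda>x. x * _"] sum.delta cong: if_cong)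
    finally have rhs: "(Jmat + mpow_comb Q (coeff_step CARD('e) t c) (Suc k)) $ i $ j
        = 1 / N + ((N - 2) / N * S0 + 2 / N * S1 + 2 * t / N^2 * (A 0 - A 1))"
      by (simp add: mpow_comb_def Jmat_entry N_def A_def)
    show ?thesis unfolding lhs rhs using N by (simp add: field_simps power2_eq_square)
  qed
  then show ?thesis by (simp add: vec_eq_iff t_def)
qed

lemma L0op_iter_Jmat:
  fixes Q :: "real^'e^'e"
  assumes Q: "stochastic Q" and sym: "\<forall>i j. Q$i$j = Q$j$i"
  shows "(L0op Q ^^ k) Jmat = Jmat + mpow_comb Q (L0_coeff Q k) k"
proof (induction k)
  case 0
  show ?case by (simp add: mpow_comb_def vec_eq_iff)
next
  case (Suc k)
  have "L0_coeff Q (Suc k) = coeff_step CARD('e) (trace ((L0op Q ^^ k) Jmat)) (L0_coeff Q k)"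
    by (simp add: fun_eq_iff)
  then show ?case
    using Suc L0op_Jmat_plus_mpow_comb[OF Q sym, of "L0_coeff Q k" k] L0_coeff_eq_0[of k "Suc k" Q]
    by simp
qed

lemma coeff_step_l1_le:
  assumes n: "2 \<le> n" and top: "c (Suc k) = 0"
  shows "(\<Sum>s\<le>Suc k. norm (coeff_step n t c s)) \<le> (\<Sum>s\<le>k. norm (c s)) + 4 * norm t / (real n)^2"
proof -
  define w where "w s = (if s = 0 then 1 else 0) + (if s = 1 then 1 else (0::real))" for s :: nat
  have norm_n2: "norm (of_nat n - 2 :: complex) = real n - 2"
  proof -
    have "norm (of_nat n - 2 :: complex) = norm (of_real (real n - 2) :: complex)" by simp
    also have "\<dots> = real n - 2" using n by (simp only: norm_of_real)
    finally show ?thesis .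
  qed
  have pointwise: "norm (coeff_step n t c s) \<le> (real n - 2) / real n * norm (c s)
      + (if s = 0 then 0 else 2 / real n * norm (c (s - 1))) + 2 * norm t / (real n)^2 * w s" for s
  proof -
    let ?a = "(of_nat n - 2) / of_nat n * c s"
      and ?b = "if s = 0 then 0 else 2 / of_nat n * c (s - 1)"
      and ?c = "2 * t / (of_nat n)^2 * ((if s = 0 then 1 else 0) - (if s = 1 then 1 else (0::complex)))"
    have "norm (coeff_step n t c s) \<le> norm ?a + norm ?b + norm ?c"
      unfolding coeff_step_def by (metis norm_triangle_le norm_triangle_ineq add_mono order_refl)
    also have "\<dots> = (real n - 2) / real n * norm (c s)
        + (if s = 0 then 0 else 2 / real n * norm (c (s - 1))) + 2 * norm t / (real n)^2 * w s"
      by (simp add: norm_mult norm_n2 norm_divide norm_power w_def)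
    finally show ?thesis .
  qed
  have "(\<Sum>s\<le>Suc k. norm (coeff_step n t c s)) \<le> (\<Sum>s\<le>Suc k. (real n - 2) / real n * norm (c s)
      + (if s = 0 then 0 else 2 / real n * norm (c (s - 1))) + 2 * norm t / (real n)^2 * w s)"
    by (intro sum_mono pointwise)
  also have "\<dots> = (real n - 2) / real n * (\<Sum>s\<le>Suc k. norm (c s))
      + (\<Sum>s\<le>Suc k. if s = 0 then 0 else 2 / real n * norm (c (s - 1)))
      + 2 * norm t / (real n)^2 * (\<Sum>s\<le>Suc k. w s)"
    by (simp only: sum.distrib sum_distrib_left)
  also have "(\<Sum>s\<le>Suc k. norm (c s)) = (\<Sum>s\<le>k. norm (c s))" using top by simp
  also have "(\<Sum>s\<le>Suc k. if s = 0 then 0 else 2 / real n * norm (c (s - 1)))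
      = 2 / real n * (\<Sum>s\<le>k. norm (c s))"
    unfolding sum.atMost_Suc_shift by (simp add: sum_distrib_left)
  also have "(\<Sum>s\<le>Suc k. w s) = 2" by (simp add: sum.distrib w_def)
  finally show ?thesis using n by (simp add: field_simps)
qed
lemma trace_Jmat_plus_mpow_comb:
  "trace (Jmat + mpow_comb Q c k) = 1 + (\<Sum>s\<le>k. c s * trace (cmat (mpow Q s)))"
  unfolding trace_add by (simp add: trace_def Jmat_entry mpow_comb_def sum_distrib_left sum.swap[of _ "{..k}"])
lemma norm_trace_Jmat_plus_mpow_comb_le:
  fixes Q :: "real^'e^'e"
  assumes Q: "stochastic Q"
  shows "norm (trace (Jmat + mpow_comb Q c k)) \<le> 1 + real CARD('e) * (\<Sum>s\<le>k. norm (c s))"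
proof -
  have "norm (trace (cmat (mpow Q s))) \<le> real CARD('e)" for s
  proof -
    have "norm (trace (cmat (mpow Q s))) \<le> (\<Sum>i\<in>UNIV. norm (cmat (mpow Q s) $ i $ i))"
      unfolding trace_def by (rule norm_sum)
    also have "\<dots> \<le> (\<Sum>i\<in>(UNIV::'e set). 1)"
      using stochastic_mpow[OF Q] stochastic_entry_le_1[OF stochastic_mpow[OF Q]]
      by (intro sum_mono) (simp add: cmat_def stochastic_def)
    finally show ?thesis by simp
  qed
  then have "norm (\<Sum>s\<le>k. c s * trace (cmat (mpow Q s))) \<le> (\<Sum>s\<le>k. norm (c s) * real CARD('e))"
    by (intro order_trans[OF norm_sum] sum_mono) (simp add: norm_mult mult_left_mono)
  then show ?thesis
    unfolding trace_Jmat_plus_mpow_comb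
    using norm_triangle_ineq[of 1 "\<Sum>s\<le>k. c s * trace (cmat (mpow Q s))"]
      sum_distrib_right[of "\<lambda>s. norm (c s)" "{..k}" "real CARD('e)", symmetric]
    by (simp add: mult.commute)
qed
lemma L0_coeff_l1_le:
  fixes Q :: "real^'e^'e"
  assumes Q: "stochastic Q" and sym: "\<forall>i j. Q$i$j = Q$j$i" and N: "2 \<le> CARD('e)"
  shows "(\<Sum>s\<le>k. norm (L0_coeff Q k s)) \<le> ((1 + 4 / real CARD('e)) ^ k - 1) / real CARD('e)"
proof (induction k)
  case (Suc k)
  define N where "N = real CARD('e)"
  define a where "a = (\<Sum>s\<le>k. norm (L0_coeff Q k s))"
  have N0: "N > 0" by (simp add: N_def)
  have trace: "norm (trace ((L0op Q ^^ k) Jmat)) \<le> 1 + N * a"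
    unfolding L0op_iter_Jmat[OF Q sym] a_def N_def by (rule norm_trace_Jmat_plus_mpow_comb_le[OF Q])
  have "(\<Sum>s\<le>Suc k. norm (L0_coeff Q (Suc k) s)) \<le> a + 4 * norm (trace ((L0op Q ^^ k) Jmat)) / N^2"
    using coeff_step_l1_le[OF N, of "L0_coeff Q k" k] L0_coeff_eq_0[of k "Suc k" Q]
    by (simp add: a_def N_def)
  also have "\<dots> \<le> a + 4 * (1 + N * a) / N^2"
    using trace N0 by (intro add_left_mono divide_right_mono) auto
  also have "\<dots> = a * (1 + 4 / N) + 4 / N^2"
    using N0 by (simp add: field_simps power2_eq_square)
  also have "\<dots> \<le> ((1 + 4 / N) ^ k - 1) / N * (1 + 4 / N) + 4 / N^2"
    using Suc N0 by (intro add_right_mono mult_right_mono) (auto simp: a_def N_def)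
  also have "\<dots> = ((1 + 4 / N) ^ Suc k - 1) / N"
    using N0 by (simp add: field_simps power2_eq_square)
  finally show ?case by (simp add: N_def)
qed simp
lemma diag_deviation_Jmat_plus_mpow_comb_le:
  "diag_deviation (Jmat + mpow_comb Q c k) \<le> (\<Sum>s\<le>k. norm (c s) * diag_deviation (cmat (mpow Q s)))"
proof -
  have offset: "diag_offset (Jmat + mpow_comb Q c k) y = (\<Sum>s\<le>k. c s * diag_offset (cmat (mpow Q s)) y)" for y
    unfolding diag_offset_def trace_Jmat_plus_mpow_comb
    by (simp add: mpow_comb_def Jmat_entry right_diff_distrib sum_subtractf sum_divide_distrib
        add_divide_distrib mult_ac)
  have "diag_deviation (Jmat + mpow_comb Q c k)
      \<le> (\<Sum>y\<in>UNIV. \<Sum>s\<le>k. norm (c s) * norm (diag_offset (cmat (mpow Q s)) y))"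
    unfolding diag_deviation_def offset
    by (intro sum_mono) (rule order_trans[OF norm_sum], simp add: norm_mult)
  also have "\<dots> = (\<Sum>s\<le>k. norm (c s) * diag_deviation (cmat (mpow Q s)))"
    by (subst sum.swap) (simp add: diag_deviation_def sum_distrib_left)
  finally show ?thesis .
qed

lemma Delta_nonneg:
  fixes Q :: "real^'e^'e"
  assumes "stochastic Q" and "\<forall>i j. Q$i$j = Q$j$i" and "0 \<le> \<gamma>"
  shows "0 \<le> Delta Q \<gamma>"
proof -
  have "0 \<le> diag_deviation (cmat (mpow Q 0))" by (simp add: diag_deviation_def sum_nonneg)
  also have "\<dots> \<le> 2 * real CARD('e) * Delta Q \<gamma>" by (rule diag_deviation_mpow_le_Delta[OF assms])
  finally show ?thesis by (simp add: zero_le_mult_iff)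
qed

lemma diag_deviation_L0op_iter_le:
  fixes Q :: "real^'e^'e"
  assumes Q: "stochastic Q" and sym: "\<forall>i j. Q$i$j = Q$j$i" and "0 \<le> \<gamma>" and N: "2 \<le> CARD('e)"
  shows "diag_deviation ((L0op Q ^^ k) Jmat) \<le> 2 * Delta Q \<gamma> * ((1 + 4 / real CARD('e)) ^ k - 1)"
proof -
  let ?D = "2 * real CARD('e) * Delta Q \<gamma>"
  have "diag_deviation ((L0op Q ^^ k) Jmat) \<le> (\<Sum>s\<le>k. norm (L0_coeff Q k s) * ?D)"
    unfolding L0op_iter_Jmat[OF Q sym]
    by (rule order_trans[OF diag_deviation_Jmat_plus_mpow_comb_le sum_mono])
      (simp add: mult_left_mono diag_deviation_mpow_le_Delta[OF Q sym \<open>0 \<le> \<gamma>\<close>])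
  also have "\<dots> \<le> ((1 + 4 / real CARD('e)) ^ k - 1) / real CARD('e) * ?D"
    unfolding sum_distrib_right[symmetric] using Delta_nonneg[OF Q sym \<open>0 \<le> \<gamma>\<close>]
    by (intro mult_right_mono L0_coeff_l1_le[OF Q sym N]) simp
  also have "\<dots> = 2 * Delta Q \<gamma> * ((1 + 4 / real CARD('e)) ^ k - 1)"
    by (simp add: field_simps)
  finally show ?thesis .
qed

lemma entrywise_norm_Lop_iter_diff_le:
  fixes Q :: "real^'e^'e"
  assumes Q: "stochastic Q" and sym: "\<forall>i j. Q$i$j = Q$j$i" and tr: "trace Q = 0"
    and "0 \<le> \<gamma>" and N: "2 \<le> CARD('e)"
  shows "entrywise_norm ((Lop Q ^^ n) Jmat - (L0op Q ^^ n) Jmat) \<le> 2 * Delta Q \<gamma> * (1 + 4 / real CARD('e)) ^ n"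
proof (induction n)
  case 0
  show ?case using Delta_nonneg[OF Q sym \<open>0 \<le> \<gamma>\<close>] by (simp add: entrywise_norm_def)
next
  case (Suc n)
  define X where "X = (Lop Q ^^ n) Jmat"
  define Y where "Y = (L0op Q ^^ n) Jmat"
  define b where "b = 2 * Delta Q \<gamma> * (1 + 4 / real CARD('e)) ^ n"
  have "(Lop Q ^^ Suc n) Jmat - (L0op Q ^^ Suc n) Jmat = Lop Q (X - Y) + L_defect Q Y"
    by (simp add: X_def Y_def Lop_diff Lop_eq_L0op_plus_L_defect[OF Q sym tr])
  then have "entrywise_norm ((Lop Q ^^ Suc n) Jmat - (L0op Q ^^ Suc n) Jmat)
      \<le> entrywise_norm (X - Y) + 4 * diag_deviation Y / real CARD('e)"
    using entrywise_norm_Lop_le[OF Q, of "X - Y"] entrywise_norm_L_defect_le[OF Q sym, of Y]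
      entrywise_norm_add_le[of "Lop Q (X - Y)" "L_defect Q Y"]
    by simp
  also have "\<dots> \<le> b + 4 * b / real CARD('e)"
    using Suc.IH diag_deviation_L0op_iter_le[OF Q sym \<open>0 \<le> \<gamma>\<close> N, of n]
      Delta_nonneg[OF Q sym \<open>0 \<le> \<gamma>\<close>]
    by (intro add_mono divide_right_mono mult_left_mono) (auto simp: X_def Y_def b_def algebra_simps)
  also have "\<dots> = 2 * Delta Q \<gamma> * (1 + 4 / real CARD('e)) ^ Suc n"
    by (simp add: b_def field_simps)
  finally show ?case .
qed

lemma S_beta_increment_difference:
  fixes Q :: "real^'e^'e"
  assumes Q: "stochastic Q" and sym: "\<forall>i j. Q$i$j = Q$j$i" and tr: "trace Q = 0"
  shows "(S_beta u (Lop Q X) / of_nat CARD('e) - S_beta u X / of_nat CARD('e))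
      - (S_beta u (L0op Q Y) / of_nat CARD('e) - S_beta u Y / of_nat CARD('e))
    = of_real (2 * u * (1 - u) / (real CARD('e))^2) * trace ((X - Y) ** cmat Q)"
proof -
  have diff: "trace ((X - Y) ** cmat Q) = trace (X ** cmat Q) - trace (Y ** cmat Q)"
    by (simp add: matrix_mult_diff_left trace_def sum_subtractf)
  show ?thesis
    unfolding diff S_beta_eq entry_sum_Lop[OF Q] entry_sum_L0op[OF Q sym] trace_Lop[OF Q sym tr]
      trace_L0op[OF tr]
    by (simp add: field_simps power2_eq_square)
qed

lemma norm_geometric_average_le:
  fixes a :: "nat \<Rightarrow> complex" and w :: real
  assumes "0 \<le> w" "w \<le> 1" and bound: "\<And>n. n \<le> M \<Longrightarrow> norm (a n) \<le> B"
  shows "norm (\<Sum>n = 0..M. of_real ((1 - w) * w ^ n) * a n) \<le> B"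
proof -
  have "0 \<le> B" using bound[of 0] by (meson norm_ge_zero order_trans le0)
  have "norm (\<Sum>n = 0..M. of_real ((1 - w) * w ^ n) * a n) \<le> (\<Sum>n = 0..M. (1 - w) * w ^ n * B)"
    using assms by (intro order_trans[OF norm_sum] sum_mono)
      (simp add: norm_mult mult_left_mono del: of_real_diff of_real_mult of_real_power)
  also have "\<dots> = (1 - w) * (\<Sum>n<Suc M. w ^ n) * B"
    by (simp add: sum_distrib_left sum_distrib_right atLeast0AtMost lessThan_Suc_atMost mult_ac)
  also have "(1 - w) * (\<Sum>n<Suc M. w ^ n) = 1 - w ^ Suc M"
    by (rule one_diff_power_eq[symmetric])
  also have "(1 - w ^ Suc M) * B \<le> B"
    using assms \<open>0 \<le> B\<close> power_le_one[of w "Suc M"] by (intro mult_left_le_one_le) simp_all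
  finally show ?thesis .
qed

lemma discounted_S_beta_difference_eq:
  fixes Q :: "real^'e^'e"
  assumes Q: "stochastic Q" and sym: "\<forall>i j. Q$i$j = Q$j$i" and tr: "trace Q = 0"
    and "0 < lam" and "0 < u" and "u < 1"
  defines "N \<equiv> real CARD('e)" and "w \<equiv> real CARD('e) / (real CARD('e) + lam)"
  shows "complex_of_real (lam * N^2 / (2 * u * (1 - u) * (N + lam)))
      * (\<Sum>n = 0..M. complex_of_real (w ^ n) *
          ((S_beta u ((Lop Q ^^ (n+1)) Jmat) / of_nat CARD('e) - S_beta u ((Lop Q ^^ n) Jmat) / of_nat CARD('e))
         - (S_beta u ((L0op Q ^^ (n+1)) Jmat) / of_nat CARD('e) - S_beta u ((L0op Q ^^ n) Jmat) / of_nat CARD('e))))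
    = (\<Sum>n = 0..M. of_real ((1 - w) * w ^ n) * trace (((Lop Q ^^ n) Jmat - (L0op Q ^^ n) Jmat) ** cmat Q))"
proof -
  define c where "c = lam * N^2 / (2 * u * (1 - u) * (N + lam))"
  define r where "r = 2 * u * (1 - u) / N^2"
  have "0 < N" "0 < N + lam" "0 < 2 * u * (1 - u)" using assms(4-6) by (simp_all add: N_def)
  then have "c * r = lam / (N + lam)" using assms(5,6) by (simp add: c_def r_def power2_eq_square)
  also have "\<dots> = 1 - w" using \<open>0 < N + lam\<close> by (simp add: w_def N_def field_simps)
  finally have "of_real c * (of_real (w ^ n) * (of_real r * T)) = of_real ((1 - w) * w ^ n) * T"
    for n and T :: complex
    by (metis (no_types, lifting) mult.assoc mult.commute of_real_mult)
  then show ?thesis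
    unfolding c_def[symmetric] sum_distrib_left
    by (simp add: S_beta_increment_difference[OF Q sym tr] N_def r_def)
qed

theorem lemma4p9:
  fixes Q :: "real^'e^'e" and lam u \<gamma> :: real and m :: nat
  assumes "CARD('e) > 8"
    and "stochastic Q" and "irreducible_mat Q"
    and "\<forall>x y. Q$x$y = Q$y$x" and "trace Q = 0"
    and "lam > 0" and "0 < u" and "u < 1" and "0 \<le> \<gamma>" and "\<gamma> \<le> 1"
  shows "norm (complex_of_real (lam * (real CARD('e))^2 / (2 * u * (1 - u) * (real CARD('e) + lam)))
      * (\<Sum>n = 0..m * CARD('e). complex_of_real ((real CARD('e) / (real CARD('e) + lam)) ^ n) *
          ((S_beta u ((Lop Q ^^ (n+1)) Jmat) / of_nat CARD('e) - S_beta u ((Lop Q ^^ n) Jmat) / of_nat CARD('e))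
         - (S_beta u ((L0op Q ^^ (n+1)) Jmat) / of_nat CARD('e) - S_beta u ((L0op Q ^^ n) Jmat) / of_nat CARD('e)))))
    \<le> 40 * Delta Q \<gamma> / (1 - u) * (1 + 6 / real CARD('e)) ^ (m * CARD('e))"
proof -
  note Q = assms(2) and sym = assms(4) and tr = assms(5) and \<gamma> = assms(9)
  define N where "N = real CARD('e)"
  define M where "M = m * CARD('e)"
  have N: "2 \<le> CARD('e)" "0 < N" using assms(1) by (auto simp: N_def)
  have "norm (\<Sum>n = 0..M. of_real ((1 - N / (N + lam)) * (N / (N + lam)) ^ n)
      * trace (((Lop Q ^^ n) Jmat - (L0op Q ^^ n) Jmat) ** cmat Q)) \<le> 2 * Delta Q \<gamma> * (1 + 4 / N) ^ M"
  proof (rule norm_geometric_average_le)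
    fix n assume "n \<le> M"
    then have "2 * Delta Q \<gamma> * (1 + 4 / N) ^ n \<le> 2 * Delta Q \<gamma> * (1 + 4 / N) ^ M"
      using N Delta_nonneg[OF Q sym \<gamma>] by (intro mult_left_mono power_increasing) auto
    then show "norm (trace (((Lop Q ^^ n) Jmat - (L0op Q ^^ n) Jmat) ** cmat Q))
        \<le> 2 * Delta Q \<gamma> * (1 + 4 / N) ^ M"
      using norm_trace_mult_cmat_le[OF Q] entrywise_norm_Lop_iter_diff_le[OF Q sym tr \<gamma> N(1), of n]
      unfolding N_def by (meson order_trans)
  qed (use N assms(6) in auto)
  also have "\<dots> \<le> 40 * Delta Q \<gamma> / (1 - u) * (1 + 6 / N) ^ M"
  proof -
    have "2 \<le> 40 / (1 - u)" using assms(7,8) by (simp add: le_divide_eq)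
    moreover have "(1 + 4 / N) ^ M \<le> (1 + 6 / N) ^ M"
      using N by (intro power_mono) (auto simp: divide_right_mono)
    ultimately have "2 * (Delta Q \<gamma> * (1 + 4 / N) ^ M) \<le> 40 / (1 - u) * (Delta Q \<gamma> * (1 + 6 / N) ^ M)"
      using Delta_nonneg[OF Q sym \<gamma>] N assms(8) by (intro mult_mono mult_left_mono) auto
    then show ?thesis by (simp add: mult_ac)
  qed
  finally show ?thesis
    unfolding discounted_S_beta_difference_eq[OF Q sym tr assms(6-8)] by (simp add: N_def M_def)
qed

end
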